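(* Let $\beta\in(-1,\frac12)$ and $\delta=2\beta+1$. Then as $T\to\infty$, $$\int_{0\le x\le z\le T}e^{x-z}x^{\beta}z^{\beta}\,\mathrm{d}x\,\mathrm{d}z=\begin{cases}\log T+2\log2+\gamma-\frac{1}{2T}-\frac{3}{8T^2}+O(T^{-3}),&\beta=-\frac12,\\[4pt] -\frac{\Gamma^2(1+\beta)}{2\cos(\beta\pi)}+\frac{T^{\delta}}{\delta}-\frac12T^{\delta-1}+\frac{\beta(\beta-1)}{\delta-2}T^{\delta-2}-\frac{\beta(\beta-2)}{2}T^{\delta-3}+O(T^{\delta-4}),&\beta\neq-\frac12,\end{cases}$$ where $\gamma$ is Euler's constant.
   Context: $g(T)=O(\phi(T))$ means $|g(T)|\le M\phi(T)$ for all sufficiently large $T$, for some constant $M$. *)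

theory Defs
  imports "HOL-Analysis.Analysis" "HOL-Library.Landau_Symbols"
begin

definition tri_integral :: "real \<Rightarrow> real \<Rightarrow> real" where
  "tri_integral \<beta> T =
     set_lebesgue_integral lborel {(x, z). 0 \<le> x \<and> x \<le> z \<and> z \<le> T}
       (\<lambda>(x, z). exp (x - z) * x powr \<beta> * z powr \<beta>)"

end

theory Submission
  imports Defs "HOL-Real_Asymp.Real_Asymp"
begin

text \<open>Substituting \<open>x = z (1 - t)\<close> turns the triangle integral into
  \<open>\<integral>\<^sub>0\<^sup>T z\<^sup>\<delta> \<phi>(z) dz\<close> with \<open>\<phi>(z) = \<integral>\<^sub>0\<^sup>1 e\<^sup>-\<^sup>z\<^sup>t (1 - t)\<^sup>\<beta> dt\<close> (\<open>beta_laplace \<beta>\<close>).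
  By Watson's lemma \<open>\<phi>(z) = (\<Sum>k<4. c\<^sub>k / z\<^sup>k\<^sup>+\<^sup>1) + O(z\<^sup>-\<^sup>5)\<close>, where \<open>c\<^sub>k = (-1)\<^sup>k k! (\<beta> choose k)\<close>
  are the Laplace transforms of the Taylor coefficients of \<open>(1 - t)\<^sup>\<beta>\<close>; integrating
  termwise gives the powers of \<open>T\<close> and an error \<open>O(T\<^sup>\<delta>\<^sup>-\<^sup>4)\<close>.
  The constant term is the Mellin transform of \<open>\<phi>\<close> at \<open>\<delta> + 1\<close>, regularised by removing the
  terms of the expansion that are not integrable at \<open>0\<close>. Exchanging the integrals, it is
  \<open>\<Gamma>(\<delta> + 1)\<close> times a regularised Beta integral, whose value is the analytic continuation
  \<open>B(-\<delta>, \<beta> + 1)\<close>; the reflection formula turns the product into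
  \<open>-\<Gamma>(1 + \<beta>)\<^sup>2 / (2 cos \<beta>\<pi>)\<close>. For \<open>\<beta> = -1/2\<close> the term \<open>k = 0\<close> yields \<open>log T\<close>, and the
  constant is the limit of \<open>\<Gamma>(w) B(1 - w, 1/2) - 1/(1 - w)\<close> as \<open>w \<rightarrow> 1\<close>, that is
  \<open>2 log 2 + \<gamma>\<close>.\<close>

lemma lborel_integral_of_nonneg_has_integral:
  fixes f :: "real \<Rightarrow> real"
  assumes "(f has_integral I) A" "\<And>x. x \<in> A \<Longrightarrow> 0 \<le> f x" "A \<in> sets borel"
    "f \<in> borel_measurable borel"
  shows "integrable lborel (\<lambda>x. indicator A x * f x)" "(\<integral>x. indicator A x * f x \<partial>lborel) = I"
proof -
  have nn: "(\<integral>\<^sup>+ x. ennreal (indicator A x * f x) \<partial>lborel) = ennreal I"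
    by (rule nn_integral_has_integral_lebesgue) (use assms in auto)
  have "I \<ge> 0" using has_integral_nonneg[OF assms(1)] assms(2) by auto
  have "(\<lambda>x. indicator A x * f x) \<in> borel_measurable lborel"
    using assms(3,4) by measurable
  from nn_integral_eq_integrable[THEN iffD1, OF this _ \<open>I \<ge> 0\<close> nn]
  show "integrable lborel (\<lambda>x. indicator A x * f x)" "(\<integral>x. indicator A x * f x \<partial>lborel) = I"
    by (auto intro!: AE_I2 simp: indicator_def assms(2))
qed

lemma integral_lborel_eq_integral_Icc:
  fixes f :: "real \<Rightarrow> real"
  assumes fi: "integrable lborel f" and f0: "\<And>t. t \<notin> {a..b} \<Longrightarrow> f t = 0"
  shows "(\<integral>t. f t \<partial>lborel) = integral {a..b} f"
proof -
  have eq: "(\<lambda>t. indicator {a..b} t *\<^sub>R f t) = f"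
    using f0 by (auto simp: fun_eq_iff indicator_def)
  have "set_integrable lborel {a..b} f" unfolding set_integrable_def eq by (rule fi)
  moreover have "(\<integral>t. f t \<partial>lborel) = set_lebesgue_integral lborel {a..b} f"
    unfolding set_lebesgue_integral_def eq ..
  ultimately show ?thesis by (simp add: set_borel_integral_eq_integral)
qed

lemma powr_integral_greaterThanAtMost:
  fixes p T :: real
  assumes "p > -1" "T \<ge> 0"
  shows "integrable lborel (\<lambda>z. indicator {0<..T} z * z powr p)"
        "(\<integral>z. indicator {0<..T} z * z powr p \<partial>lborel) = T powr (p+1) / (p+1)"
proof -
  have "(\<lambda>z. indicator {0<..T} z * z powr p) = (\<lambda>z. indicator {0..T} z * z powr p)"
    by (auto simp: fun_eq_iff indicator_def)
  with lborel_integral_of_nonneg_has_integral[OF has_integral_powr_from_0[OF assms]]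
  show "integrable lborel (\<lambda>z. indicator {0<..T} z * z powr p)"
       "(\<integral>z. indicator {0<..T} z * z powr p \<partial>lborel) = T powr (p+1) / (p+1)"
    by auto
qed

lemma powr_integral_atLeast:
  fixes p T :: real
  assumes "p < -1" "T > 0"
  shows "integrable lborel (\<lambda>z. indicator {T..} z * z powr p)"
        "(\<integral>z. indicator {T..} z * z powr p \<partial>lborel) = - (T powr (p+1)) / (p+1)"
  using lborel_integral_of_nonneg_has_integral[OF has_integral_powr_to_inf[OF assms]] assms
  by auto

lemma powr_integral_greaterThan:
  fixes p T :: real
  assumes "p < -1" "T > 0"
  shows "integrable lborel (\<lambda>z. indicator {T<..} z * z powr p)"
        "(\<integral>z. indicator {T<..} z * z powr p \<partial>lborel) = - (T powr (p+1)) / (p+1)"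
proof -
  have ae: "AE z in lborel. indicator {T..} z * z powr p = indicator {T<..} z * z powr p"
    using AE_lborel_singleton[of T] by eventually_elim (auto simp: indicator_def)
  note I = powr_integral_atLeast[OF assms]
  show "integrable lborel (\<lambda>z. indicator {T<..} z * z powr p)"
    by (rule integrable_cong_AE_imp[OF I(1) _ ae]) measurable
  show "(\<integral>z. indicator {T<..} z * z powr p \<partial>lborel) = - (T powr (p+1)) / (p+1)"
    by (subst integral_cong_AE[OF _ _ ae, symmetric]) (use I(2) in auto)
qed

lemma powr_minus_numeral: "x > 0 \<Longrightarrow> x powr (- numeral n) = 1 / x ^ numeral n"
  for x :: real by (simp add: powr_minus powr_numeral divide_inverse)

lemma powr_div_power: "z > 0 \<Longrightarrow> z powr d / z ^ k = z powr (d - real k)"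
  for z d :: real by (simp add: powr_diff powr_realpow)

lemma powr_mult_div_power: "z > 0 \<Longrightarrow> z powr d * (c / z ^ (k+1)) = c * z powr (d - real (k+1))"
  for z d c :: real by (simp only: powr_div_power[symmetric]) simp

lemma integral_inverse_Icc:
  fixes T :: real
  assumes "T \<ge> 1"
  shows "integrable lborel (\<lambda>z. indicator {1..T} z * (1 / z))"
    and "(\<integral>z. indicator {1..T} z * (1 / z) \<partial>lborel) = ln T"
proof -
  have "((\<lambda>z. 1 / z) has_integral (ln T - ln 1)) {1..T}"
    by (rule fundamental_theorem_of_calculus[OF assms])
       (auto intro!: derivative_eq_intros simp flip: has_real_derivative_iff_has_vector_derivative)
  from lborel_integral_of_nonneg_has_integral[OF this]
  show "integrable lborel (\<lambda>z. indicator {1..T} z * (1 / z))"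
    and "(\<integral>z. indicator {1..T} z * (1 / z) \<partial>lborel) = ln T"
    by auto
qed

lemma Gamma_Laplace_nn_integral:
  fixes w t :: real
  assumes "w > 0" "t > 0"
  shows "(\<integral>\<^sup>+z. ennreal (indicator {0<..} z * z powr (w-1) * exp (-(z*t))) \<partial>lborel)
         = ennreal (Gamma w * t powr (-w))"
proof -
  define g where "g = (\<lambda>u::real. ennreal (indicator {0..} u * u powr (w - 1) / exp u))"
  have gm: "g \<in> borel_measurable borel" unfolding g_def by measurable
  have scale: "g (0 + t * z) = ennreal (t powr (w-1)) *
      ennreal (indicator {0<..} z * z powr (w-1) * exp (-(z*t)))" for z
  proof (cases "z > 0")
    case True
    then show ?thesis using assms
      by (auto simp: g_def indicator_def powr_mult exp_minus field_simps ennreal_mult'[symmetric])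
  qed (use assms in \<open>auto simp: g_def indicator_def zero_le_mult_iff\<close>)
  have "ennreal (Gamma w) = (\<integral>\<^sup>+u. g u \<partial>lborel)"
    unfolding g_def by (rule Gamma_conv_nn_integral_real[OF assms(1)])
  also have "\<dots> = ennreal t * (\<integral>\<^sup>+z. g (0 + t * z) \<partial>lborel)"
    using nn_integral_real_affine[OF gm, of t 0] assms by simp
  also have "\<dots> = ennreal t * ennreal (t powr (w-1)) *
      (\<integral>\<^sup>+z. ennreal (indicator {0<..} z * z powr (w-1) * exp (-(z*t))) \<partial>lborel)"
    unfolding scale by (subst nn_integral_cmult) (auto simp: mult.assoc)
  also have "ennreal t * ennreal (t powr (w-1)) = ennreal (t powr w)"
    using assms by (simp add: ennreal_mult'[symmetric] powr_diff field_simps powr_minus)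
  finally have "ennreal (t powr (-w)) * ennreal (Gamma w) =
      (\<integral>\<^sup>+z. ennreal (indicator {0<..} z * z powr (w-1) * exp (-(z*t))) \<partial>lborel)"
    using assms by (simp add: mult.assoc[symmetric] ennreal_mult'[symmetric] powr_minus)
  then show ?thesis using assms Gamma_real_pos[of w]
    by (simp add: ennreal_mult'[symmetric] mult.commute)
qed

lemma Gamma_Laplace_integral:
  fixes w t :: real
  assumes "w > 0" "t > 0"
  shows "integrable lborel (\<lambda>z. indicator {0<..} z * z powr (w-1) * exp (-(z*t)))"
        "(\<integral>z. indicator {0<..} z * z powr (w-1) * exp (-(z*t)) \<partial>lborel) = Gamma w * t powr (-w)"
proof -
  have "(\<lambda>z. indicator {0<..} z * z powr (w-1) * exp (-(z*t))) \<in> borel_measurable lborel"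
    by measurable
  moreover have "0 \<le> Gamma w * t powr (-w)" using assms Gamma_real_pos[of w] by auto
  ultimately show "integrable lborel (\<lambda>z. indicator {0<..} z * z powr (w-1) * exp (-(z*t)))"
        "(\<integral>z. indicator {0<..} z * z powr (w-1) * exp (-(z*t)) \<partial>lborel) = Gamma w * t powr (-w)"
    using nn_integral_eq_integrable[THEN iffD1, OF _ _ _ Gamma_Laplace_nn_integral[OF assms]]
    by (auto intro!: AE_I2 simp: indicator_def)
qed

lemma Laplace_power:
  fixes z :: real and k :: nat
  assumes "z > 0"
  shows "integrable lborel (\<lambda>t. indicator {0<..} t * t ^ k * exp (-(z*t)))"
        "(\<integral>t. indicator {0<..} t * t ^ k * exp (-(z*t)) \<partial>lborel) = fact k / z ^ (k+1)"
proof -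
  have eq: "(\<lambda>t. indicator {0<..} t * t ^ k * exp (-(z*t))) =
            (\<lambda>t. indicator {0<..} t * t powr (real k + 1 - 1) * exp (-(t*z)))"
    by (auto simp: fun_eq_iff indicator_def powr_realpow mult.commute)
  note G = Gamma_Laplace_integral[of "real k + 1" z]
  show "integrable lborel (\<lambda>t. indicator {0<..} t * t ^ k * exp (-(z*t)))"
    unfolding eq using G(1) assms by simp
  have "Gamma (real k + 1) = fact k" using Gamma_fact[of k] by (simp add: add.commute)
  moreover have "z powr (-(real k + 1)) = 1 / z ^ (k+1)"
  proof -
    have e: "z powr (real k + 1) = z ^ (k+1)"
      using powr_realpow[OF assms, of "k+1"] by (simp add: add.commute)
    have "z powr (-(real k + 1)) = inverse (z ^ (k+1))" unfolding e[symmetric] by (rule powr_minus)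
    then show ?thesis by (simp add: divide_inverse)
  qed
  ultimately show "(\<integral>t. indicator {0<..} t * t ^ k * exp (-(z*t)) \<partial>lborel) = fact k / z ^ (k+1)"
    unfolding eq using G(2) assms by simp
qed

lemma Laplace_polynomial:
  fixes z :: real and a :: "nat \<Rightarrow> real"
  assumes "z > 0"
  shows "integrable lborel (\<lambda>t. exp (-(z*t)) * (indicator {0<..} t * (\<Sum>k<n. a k * t ^ k)))"
        "(\<integral>t. exp (-(z*t)) * (indicator {0<..} t * (\<Sum>k<n. a k * t ^ k)) \<partial>lborel)
           = (\<Sum>k<n. a k * fact k / z ^ (k+1))"
proof -
  have eq: "(\<lambda>t. exp (-(z*t)) * (indicator {0<..} t * (\<Sum>k<n. a k * t ^ k))) =
            (\<lambda>t. \<Sum>k<n. a k * (indicator {0<..} t * t ^ k * exp (-(z*t))))"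
    by (simp add: fun_eq_iff sum_distrib_left mult_ac)
  show "integrable lborel (\<lambda>t. exp (-(z*t)) * (indicator {0<..} t * (\<Sum>k<n. a k * t ^ k)))"
    unfolding eq
    by (intro Bochner_Integration.integrable_sum integrable_mult_right Laplace_power(1)[OF assms])
  show "(\<integral>t. exp (-(z*t)) * (indicator {0<..} t * (\<Sum>k<n. a k * t ^ k)) \<partial>lborel)
           = (\<Sum>k<n. a k * fact k / z ^ (k+1))"
    unfolding eq using Laplace_power[OF assms]
    by (subst Bochner_Integration.integral_sum) (auto intro!: integrable_mult_right)
qed

text \<open>Fubini, with \<open>\<integral>\<^sub>0\<^sup>\<infinity> z\<^sup>w\<^sup>-\<^sup>1 e\<^sup>-\<^sup>z\<^sup>t dz = \<Gamma>(w) t\<^sup>-\<^sup>w\<close> for the inner integral.\<close>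
lemma Mellin_of_Laplace:
  fixes k :: "real \<Rightarrow> real" and w :: real
  assumes w: "w > 0" and km[measurable]: "k \<in> borel_measurable borel"
    and k0: "\<And>t. t \<le> 0 \<Longrightarrow> k t = 0"
    and ki: "integrable lborel (\<lambda>t. t powr (-w) * k t)"
  shows "integrable lborel (\<lambda>z. indicator {0<..} z * z powr (w-1) * (\<integral>t. exp(-(z*t)) * k t \<partial>lborel))"
    "(\<integral>z. indicator {0<..} z * z powr (w-1) * (\<integral>t. exp(-(z*t)) * k t \<partial>lborel) \<partial>lborel)
       = Gamma w * (\<integral>t. t powr (-w) * k t \<partial>lborel)"
proof -
  define F where "F = (\<lambda>z t. indicator {0<..} z * z powr (w-1) * exp(-(z*t)) * k t)"
  have Fm: "(\<lambda>(z,t). F z t) \<in> borel_measurable (lborel \<Otimes>\<^sub>M lborel)"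
    unfolding F_def by measurable
  have inner_nn: "(\<integral>\<^sup>+z. ennreal (norm (F z t)) \<partial>lborel) = ennreal (Gamma w * norm (t powr (-w) * k t))"
    for t
  proof (cases "t > 0")
    case True
    have "(\<integral>\<^sup>+z. ennreal (norm (F z t)) \<partial>lborel) =
        (\<integral>\<^sup>+z. ennreal \<bar>k t\<bar> * ennreal (indicator {0<..} z * z powr (w-1) * exp (-(z*t))) \<partial>lborel)"
      by (intro nn_integral_cong)
         (auto simp: F_def indicator_def abs_mult ennreal_mult'[symmetric] mult_ac)
    also have "\<dots> = ennreal \<bar>k t\<bar> * ennreal (Gamma w * t powr (-w))"
      by (subst nn_integral_cmult) (auto simp: Gamma_Laplace_nn_integral[OF w True])
    also have "\<dots> = ennreal (Gamma w * norm (t powr (-w) * k t))"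
      using True w Gamma_real_pos[of w] by (simp add: ennreal_mult'[symmetric] abs_mult mult_ac)
    finally show ?thesis .
  qed (simp add: F_def k0)
  have Fi: "integrable (lborel \<Otimes>\<^sub>M lborel) (\<lambda>(z,t). F z t)"
  proof (subst integrable_iff_bounded, intro conjI Fm)
    have "(\<integral>\<^sup>+x. ennreal (norm ((\<lambda>(z,t). F z t) x)) \<partial>(lborel \<Otimes>\<^sub>M lborel)) =
        (\<integral>\<^sup>+t. ennreal (Gamma w * norm (t powr (-w) * k t)) \<partial>lborel)"
      by (subst lborel_pair.nn_integral_snd[symmetric]) (use Fm inner_nn in auto)
    also have "\<dots> = ennreal (Gamma w) * (\<integral>\<^sup>+t. ennreal (norm (t powr (-w) * k t)) \<partial>lborel)"
      using w Gamma_real_pos[of w]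
      by (subst nn_integral_cmult[symmetric]) (auto simp: ennreal_mult')
    also have "\<dots> < \<infinity>" using ki by (simp add: integrable_iff_bounded ennreal_mult_less_top)
    finally show "(\<integral>\<^sup>+x. ennreal (norm ((\<lambda>(z,t). F z t) x)) \<partial>(lborel \<Otimes>\<^sub>M lborel)) < \<infinity>" .
  qed
  have eqz: "(\<lambda>z. \<integral>t. F z t \<partial>lborel) =
      (\<lambda>z. indicator {0<..} z * z powr (w-1) * (\<integral>t. exp(-(z*t)) * k t \<partial>lborel))"
    by (simp add: fun_eq_iff F_def mult.assoc)
  show "integrable lborel (\<lambda>z. indicator {0<..} z * z powr (w-1) * (\<integral>t. exp(-(z*t)) * k t \<partial>lborel))"
    using lborel_pair.integrable_fst[OF Fi] unfolding eqz .
  have eqt: "(\<integral>z. F z t \<partial>lborel) = Gamma w * (t powr (-w) * k t)" for t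
  proof (cases "t > 0")
    case True
    have "(\<integral>z. F z t \<partial>lborel) =
        k t * (\<integral>z. indicator {0<..} z * z powr (w-1) * exp(-(z*t)) \<partial>lborel)"
      by (simp add: F_def mult_ac)
    then show ?thesis using Gamma_Laplace_integral(2)[OF w True] by simp
  qed (simp add: F_def k0)
  have "(\<integral>z. \<integral>t. F z t \<partial>lborel \<partial>lborel) = (\<integral>t. \<integral>z. F z t \<partial>lborel \<partial>lborel)"
    using lborel_pair.Fubini_integral[OF Fi] by simp
  then show "(\<integral>z. indicator {0<..} z * z powr (w-1) * (\<integral>t. exp(-(z*t)) * k t \<partial>lborel) \<partial>lborel)
       = Gamma w * (\<integral>t. t powr (-w) * k t \<partial>lborel)" by (simp add: eqz eqt)
qed

section \<open>The triangle integral as a moment of a Laplace transform\<close>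

definition beta_weight :: "real \<Rightarrow> real \<Rightarrow> real" where
  "beta_weight b t = (if 0 < t \<and> t < 1 then (1 - t) powr b else 0)"

definition beta_laplace :: "real \<Rightarrow> real \<Rightarrow> real" where
  "beta_laplace b z = (\<integral>t. exp (-(z*t)) * beta_weight b t \<partial>lborel)"

lemma beta_weight_nonneg: "beta_weight b t \<ge> 0"
  by (auto simp: beta_weight_def)

lemma beta_weight_measurable [measurable]: "beta_weight b \<in> borel_measurable borel"
  unfolding beta_weight_def by measurable

lemma beta_laplace_measurable [measurable]: "beta_laplace b \<in> borel_measurable borel"
  unfolding beta_laplace_def by measurable

lemma beta_laplace_nonneg: "beta_laplace b z \<ge> 0"
  unfolding beta_laplace_def
  by (rule integral_nonneg_AE) (auto intro!: AE_I2 beta_weight_nonneg mult_nonneg_nonneg)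

lemma Beta_integral_beta_weight:
  fixes p b :: real
  assumes "p > -1" "b > -1"
  shows "integrable lborel (\<lambda>t. t powr p * beta_weight b t)"
        "(\<integral>t. t powr p * beta_weight b t \<partial>lborel) = Beta (p+1) (b+1)"
proof -
  have eq: "t powr p * beta_weight b t =
      indicator {0..1} t *\<^sub>R (t powr (p+1-1) * (1-t) powr (b+1-1))" for t
    by (auto simp: beta_weight_def indicator_def)
  have si: "set_integrable lborel {0..1} (\<lambda>t. t powr (p+1-1) * (1-t) powr (b+1-1))"
    by (rule integrable_Beta) (use assms in auto)
  then show "integrable lborel (\<lambda>t. t powr p * beta_weight b t)"
    unfolding eq set_integrable_def .
  have "(\<integral>t. t powr p * beta_weight b t \<partial>lborel) =
      integral {0..1} (\<lambda>t. t powr (p+1-1) * (1-t) powr (b+1-1))"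
    unfolding eq using set_borel_integral_eq_integral[OF si] by (simp add: set_lebesgue_integral_def)
  also have "\<dots> = Beta (p+1) (b+1)"
    by (rule integral_unique, rule has_integral_Beta_real) (use assms in auto)
  finally show "(\<integral>t. t powr p * beta_weight b t \<partial>lborel) = Beta (p+1) (b+1)" .
qed

lemma integrable_beta_weight: "b > -1 \<Longrightarrow> integrable lborel (beta_weight b)"
proof -
  have "(\<lambda>t. t powr 0 * beta_weight b t) = beta_weight b"
    by (auto simp: beta_weight_def fun_eq_iff)
  then show "b > -1 \<Longrightarrow> integrable lborel (beta_weight b)"
    using Beta_integral_beta_weight(1)[of 0 b] by simp
qed

lemma integrable_Laplace_beta_weight:
  assumes "b > -1" "z \<ge> 0"
  shows "integrable lborel (\<lambda>t. exp (-(z*t)) * beta_weight b t)"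
proof (rule Bochner_Integration.integrable_bound[OF integrable_beta_weight[OF assms(1)]])
  show "AE t in lborel. norm (exp (-(z*t)) * beta_weight b t) \<le> norm (beta_weight b t)"
    using assms by (intro AE_I2) (auto simp: beta_weight_def mult_left_le_one_le)
qed measurable

lemma beta_laplace_le:
  assumes "b > -1" "z \<ge> 0"
  shows "beta_laplace b z \<le> (\<integral>t. beta_weight b t \<partial>lborel)"
  unfolding beta_laplace_def
  by (rule integral_mono[OF integrable_Laplace_beta_weight[OF assms] integrable_beta_weight[OF assms(1)]])
     (use assms in \<open>auto simp: beta_weight_def mult_left_le_one_le\<close>)

text \<open>The substitution \<open>x = z (1 - t)\<close> in the inner integral.\<close>
lemma nn_integral_triangle_fibre:
  fixes b z :: real
  assumes b: "b > -1" and z: "z > 0"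
  shows "(\<integral>\<^sup>+x. ennreal (indicator {0..z} x * (exp (x - z) * x powr b * z powr b)) \<partial>lborel)
       = ennreal (z powr (2*b+1) * beta_laplace b z)"
proof -
  define g where "g = (\<lambda>x. ennreal (indicator {0..z} x * (exp (x - z) * x powr b * z powr b)))"
  have gm: "g \<in> borel_measurable borel" unfolding g_def by measurable
  have subst: "AE t in lborel. g (z + (-z) * t) =
      ennreal (z powr (2*b)) * ennreal (exp (-(z*t)) * beta_weight b t)"
    using AE_lborel_singleton[of 0]
  proof eventually_elim
    case (elim t)
    consider "t < 0" | "0 < t" "t < 1" | "1 \<le> t" using elim by linarith
    then show ?case
    proof cases
      case 1
      then have "z < z + (-z) * t" using z by (simp add: mult_pos_neg)
      then show ?thesis using 1 by (simp add: g_def beta_weight_def indicator_def)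
    next
      case 2
      have "z + (-z) * t = z * (1 - t)" by (simp add: algebra_simps)
      moreover have "(z * (1 - t)) powr b = z powr b * (1 - t) powr b"
        using 2 z by (simp add: powr_mult)
      moreover have "z powr (2*b) = z powr b * z powr b"
        using z by (simp add: powr_add[symmetric])
      moreover have "z * (1 - t) \<le> z" "0 \<le> z * (1 - t)" using 2 z by auto
      ultimately show ?thesis using 2 z
        by (auto simp: g_def beta_weight_def indicator_def ennreal_mult'[symmetric] algebra_simps)
    next
      case 3
      then have "z + (-z) * t \<le> 0" using z by (simp add: algebra_simps mult_le_cancel_left1)
      then show ?thesis using 3 by (cases "z + (-z) * t = 0") (auto simp: g_def beta_weight_def)
    qed
  qed
  have "(\<integral>\<^sup>+x. g x \<partial>lborel) = ennreal z * (\<integral>\<^sup>+t. g (z + (-z) * t) \<partial>lborel)"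
    using nn_integral_real_affine[OF gm, of "-z" z] z by simp
  also have "(\<integral>\<^sup>+t. g (z + (-z) * t) \<partial>lborel) =
      ennreal (z powr (2*b)) * (\<integral>\<^sup>+t. ennreal (exp (-(z*t)) * beta_weight b t) \<partial>lborel)"
    by (subst nn_integral_cong_AE[OF subst]) (auto intro: nn_integral_cmult)
  also have "(\<integral>\<^sup>+t. ennreal (exp (-(z*t)) * beta_weight b t) \<partial>lborel) = ennreal (beta_laplace b z)"
    unfolding beta_laplace_def
    by (rule nn_integral_eq_integral[OF integrable_Laplace_beta_weight[OF b]])
       (use z in \<open>auto intro!: AE_I2 beta_weight_nonneg mult_nonneg_nonneg\<close>)
  finally have "(\<integral>\<^sup>+x. g x \<partial>lborel) = ennreal (z * z powr (2*b) * beta_laplace b z)"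
    using z by (simp add: ennreal_mult'[symmetric] beta_laplace_nonneg mult.assoc)
  also have "z * z powr (2*b) = z powr (2*b+1)" using z by (simp add: powr_add)
  finally show ?thesis unfolding g_def .
qed

lemma tri_integral_eq_moment:
  fixes b T :: real
  assumes b: "b > -1"
  shows "tri_integral b T = (\<integral>z. indicator {0<..T} z * (z powr (2*b+1) * beta_laplace b z) \<partial>lborel)"
proof -
  define S where "S = {(x::real, z::real). 0 \<le> x \<and> x \<le> z \<and> z \<le> T}"
  define f where "f = (\<lambda>(x::real, z::real). exp (x - z) * x powr b * z powr b)"
  have "S = {p\<in>space (lborel \<Otimes>\<^sub>M lborel). 0 \<le> fst p \<and> fst p \<le> snd p \<and> snd p \<le> T}"
    by (auto simp: S_def space_pair_measure)
  also have "\<dots> \<in> sets (lborel \<Otimes>\<^sub>M lborel)" by measurable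
  finally have Sm: "S \<in> sets (lborel \<Otimes>\<^sub>M lborel)" .
  have fibre: "(\<integral>\<^sup>+x. ennreal (indicator S (x,z) * f (x,z)) \<partial>lborel) =
      ennreal (indicator {0<..T} z * (z powr (2*b+1) * beta_laplace b z))" for z
  proof (cases "0 < z \<and> z \<le> T")
    case True
    then have "(\<lambda>x. ennreal (indicator S (x,z) * f (x,z))) =
        (\<lambda>x. ennreal (indicator {0..z} x * (exp (x - z) * x powr b * z powr b)))"
      by (auto simp: S_def f_def indicator_def fun_eq_iff)
    then show ?thesis using nn_integral_triangle_fibre[OF b, of z] True by simp
  next
    case False
    then have "(\<lambda>x. ennreal (indicator S (x,z) * f (x,z))) = (\<lambda>x. 0)"
      by (auto simp: S_def f_def indicator_def fun_eq_iff)
    then show ?thesis using False by simp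
  qed
  have "tri_integral b T = (\<integral>p. indicator S p * f p \<partial>(lborel \<Otimes>\<^sub>M lborel))"
    unfolding tri_integral_def set_lebesgue_integral_def S_def f_def by (simp add: lborel_prod)
  also have "\<dots> = enn2real (\<integral>\<^sup>+p. ennreal (indicator S p * f p) \<partial>(lborel \<Otimes>\<^sub>M lborel))"
    by (rule integral_eq_nn_integral) (use Sm in \<open>auto simp: f_def intro!: AE_I2\<close>)
  also have "(\<integral>\<^sup>+p. ennreal (indicator S p * f p) \<partial>(lborel \<Otimes>\<^sub>M lborel)) =
      (\<integral>\<^sup>+z. \<integral>\<^sup>+x. ennreal (indicator S (x,z) * f (x,z)) \<partial>lborel \<partial>lborel)"
    by (rule lborel_pair.nn_integral_snd[symmetric]) (use Sm in \<open>simp add: f_def\<close>)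
  also have "enn2real \<dots> = (\<integral>z. indicator {0<..T} z * (z powr (2*b+1) * beta_laplace b z) \<partial>lborel)"
    unfolding fibre
    by (rule integral_eq_nn_integral[symmetric])
       (auto intro!: AE_I2 beta_laplace_nonneg mult_nonneg_nonneg)
  finally show ?thesis .
qed

lemma beta_laplace_0:
  fixes z :: real
  assumes z: "z > 0"
  shows "beta_laplace 0 z = (1 - exp (-z)) / z"
proof -
  have "((\<lambda>t. exp (-(z*t))) has_integral (- exp (-(z*1)) / z) - (- exp (-(z*0)) / z)) {0..1}"
    by (rule fundamental_theorem_of_calculus)
       (use z in \<open>auto intro!: derivative_eq_intros simp flip: has_real_derivative_iff_has_vector_derivative\<close>)
  then have "((\<lambda>t. exp (-(z*t))) has_integral (1 - exp (-z)) / z) (cbox 0 1)"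
    by (simp add: diff_divide_distrib)
  then have "((\<lambda>t. exp (-(z*t)) * beta_weight 0 t) has_integral (1 - exp (-z)) / z) (cbox 0 1)"
    by (rule has_integral_spike_interior) (auto simp: beta_weight_def)
  moreover have "beta_laplace 0 z = integral {0..1} (\<lambda>t. exp (-(z*t)) * beta_weight 0 t)"
    unfolding beta_laplace_def
    by (rule integral_lborel_eq_integral_Icc[OF integrable_Laplace_beta_weight])
       (use z in \<open>auto simp: beta_weight_def\<close>)
  ultimately show ?thesis by (simp add: integral_unique)
qed

lemma tri_integral_0:
  fixes T :: real
  assumes T: "T \<ge> 0"
  shows "tri_integral 0 T = T - 1 + exp (-T)"
proof -
  have "((\<lambda>z. 1 - exp (-z)) has_integral (T + exp (-T)) - (0 + exp (-0))) {0..T}"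
    by (rule fundamental_theorem_of_calculus)
       (use T in \<open>auto intro!: derivative_eq_intros simp flip: has_real_derivative_iff_has_vector_derivative\<close>)
  from lborel_integral_of_nonneg_has_integral(2)[OF this]
  have "(\<integral>z. indicator {0..T} z * (1 - exp (-z)) \<partial>lborel) = T - 1 + exp (-T)"
    by simp
  moreover have "(\<lambda>z. indicator {0<..T} z * (z powr (2 * 0 + 1) * beta_laplace 0 z)) =
      (\<lambda>z. indicator {0..T} z * (1 - exp (-z)))"
    by (auto simp: fun_eq_iff indicator_def beta_laplace_0)
  ultimately show ?thesis by (simp add: tri_integral_eq_moment)
qed

section \<open>Watson's lemma\<close>

lemma exp_neg_le_power:
  fixes x :: real and m :: nat
  assumes "x > 0" "m > 0"
  shows "exp (-x) \<le> (m / x) ^ m"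
proof -
  have "(x / m) ^ m \<le> (1 + x / m) ^ m"
    using assms by (intro power_mono) auto
  also have "\<dots> \<le> exp x" by (rule exp_ge_one_plus_x_over_n_power_n) (use assms in auto)
  finally have "1 / exp x \<le> 1 / (x / m) ^ m"
    using assms by (intro divide_left_mono) auto
  then show ?thesis using assms by (simp add: exp_minus power_divide inverse_eq_divide)
qed

lemma abs_polynomial_le_power:
  fixes a :: "nat \<Rightarrow> real"
  assumes "0 < e" "e \<le> 1" "e \<le> t"
  shows "\<bar>\<Sum>k<n. a k * t ^ k\<bar> \<le> (\<Sum>k<n. \<bar>a k\<bar>) / e ^ n * t ^ n"
proof -
  have t0: "t > 0" using assms by auto
  have tk: "t ^ k \<le> t ^ n / e ^ n" if "k \<le> n" for k
  proof (cases "t \<ge> 1")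
    case True
    have "t ^ k \<le> t ^ n" using True that by (intro power_increasing) auto
    also have "\<dots> \<le> t ^ n / e ^ n"
      using assms t0 by (simp add: le_divide_eq power_le_one mult_le_cancel_left1)
    finally show ?thesis .
  next
    case False
    have "t ^ k \<le> 1" using False t0 by (intro power_le_one) auto
    also have "1 \<le> (t / e) ^ n" using assms by (intro one_le_power) auto
    finally show ?thesis by (simp add: power_divide)
  qed
  have "\<bar>\<Sum>k<n. a k * t ^ k\<bar> \<le> (\<Sum>k<n. \<bar>a k\<bar> * t ^ k)"
    using t0 by (rule_tac order_trans[OF sum_abs]) (simp add: abs_mult)
  also have "\<dots> \<le> (\<Sum>k<n. \<bar>a k\<bar> * (t ^ n / e ^ n))"
    using tk by (intro sum_mono mult_left_mono) auto
  also have "\<dots> = (\<Sum>k<n. \<bar>a k\<bar>) * (t ^ n / e ^ n)" by (simp only: sum_distrib_right)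
  finally show ?thesis by (simp add: divide_inverse mult_ac)
qed

lemma bigo_at_right_0_bound:
  fixes f :: "real \<Rightarrow> real"
  assumes "f \<in> O[at_right 0](\<lambda>t. t ^ n)"
  obtains e K where "0 < e" "e < 1" "K > 0" "\<And>t. 0 < t \<Longrightarrow> t \<le> e \<Longrightarrow> \<bar>f t\<bar> \<le> K * t ^ n"
proof -
  obtain K where "K > 0" "eventually (\<lambda>t. norm (f t) \<le> K * norm (t ^ n)) (at_right 0)"
    using assms by (elim landau_o.bigE)
  then obtain e0 where "e0 > 0" "\<And>t. 0 < t \<Longrightarrow> t < e0 \<Longrightarrow> \<bar>f t\<bar> \<le> K * t ^ n"
    unfolding eventually_at_right_field by (auto simp: abs_mult)
  with \<open>K > 0\<close> show ?thesis by (intro that[of "min (e0 / 2) (1 / 2)" K]) auto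
qed

lemma abs_Laplace_remainder_le:
  fixes g p :: "real \<Rightarrow> real" and z e K t :: real
  assumes z: "z > 0" and g0: "\<And>t. t \<le> 0 \<Longrightarrow> g t = 0"
    and near: "0 < t \<Longrightarrow> t \<le> e \<Longrightarrow> \<bar>g t - p t\<bar> \<le> K * t ^ n"
    and far: "e < t \<Longrightarrow> \<bar>p t\<bar> \<le> K * t ^ n"
  shows "\<bar>exp (-(z*t)) * g t - exp (-(z*t)) * (indicator {0<..} t * p t)\<bar>
         \<le> K * (indicator {0<..} t * t ^ n * exp (-(z*t))) + exp (-(z*e)) * \<bar>g t\<bar>"
proof -
  consider "t \<le> 0" | "0 < t" "t \<le> e" | "0 < t" "e < t" by linarith
  then show ?thesis
  proof cases
    case 1
    then show ?thesis by (simp add: g0)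
  next
    case 2
    have "\<bar>exp (-(z*t)) * g t - exp (-(z*t)) * (indicator {0<..} t * p t)\<bar>
        = exp (-(z*t)) * \<bar>g t - p t\<bar>"
      using 2 by (simp add: abs_mult flip: right_diff_distrib)
    also have "\<dots> \<le> exp (-(z*t)) * (K * t ^ n)"
      using near[OF 2] by (intro mult_left_mono) auto
    finally show ?thesis using 2 by (simp add: mult_ac add_increasing2)
  next
    case 3
    have "\<bar>exp (-(z*t)) * g t - exp (-(z*t)) * (indicator {0<..} t * p t)\<bar>
        \<le> exp (-(z*t)) * \<bar>g t\<bar> + exp (-(z*t)) * \<bar>p t\<bar>"
      using 3 abs_triangle_ineq4[of "g t" "p t"]
      by (simp add: abs_mult mult_left_mono flip: distrib_left right_diff_distrib)
    also have "exp (-(z*t)) * \<bar>g t\<bar> \<le> exp (-(z*e)) * \<bar>g t\<bar>"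
      using 3 z by (intro mult_right_mono) auto
    also have "exp (-(z*t)) * \<bar>p t\<bar> \<le> exp (-(z*t)) * (K * t ^ n)"
      using far 3 by (intro mult_left_mono) auto
    finally show ?thesis using 3 by (simp add: mult_ac)
  qed
qed

text \<open>Near \<open>0\<close> the remainder is \<open>O(t\<^sup>n)\<close>, whose Laplace transform is \<open>O(z\<^sup>-\<^sup>n\<^sup>-\<^sup>1)\<close>;
  away from \<open>0\<close> the factor \<open>e\<^sup>-\<^sup>z\<^sup>t\<close> is exponentially small.\<close>
lemma Watson_lemma:
  fixes g :: "real \<Rightarrow> real" and a :: "nat \<Rightarrow> real"
  assumes gi: "integrable lborel g" and g0: "\<And>t. t \<le> 0 \<Longrightarrow> g t = 0"
    and gO: "(\<lambda>t. g t - (\<Sum>k<n. a k * t ^ k)) \<in> O[at_right 0](\<lambda>t. t ^ n)"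
  obtains M where "\<And>z. z > 0 \<Longrightarrow>
    \<bar>(\<integral>t. exp (-(z*t)) * g t \<partial>lborel) - (\<Sum>k<n. a k * fact k / z ^ (k+1))\<bar> \<le> M / z ^ (n+1)"
proof -
  define p where "p = (\<lambda>t. \<Sum>k<n. a k * t ^ k)"
  have gm[measurable]: "g \<in> borel_measurable borel" using borel_measurable_integrable[OF gi] by simp
  obtain e K where e: "0 < e" "e < 1" "K > 0"
    "\<And>t. 0 < t \<Longrightarrow> t \<le> e \<Longrightarrow> \<bar>g t - p t\<bar> \<le> K * t ^ n"
    using bigo_at_right_0_bound[OF gO] unfolding p_def by blast
  define K' where "K' = K + (\<Sum>k<n. \<bar>a k\<bar>) / e ^ n"
  have K': "K \<le> K'" "\<And>t. e \<le> t \<Longrightarrow> \<bar>p t\<bar> \<le> K' * t ^ n"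
  proof -
    show "K \<le> K'" using e by (simp add: K'_def)
    fix t assume "e \<le> t"
    then have "\<bar>p t\<bar> \<le> (\<Sum>k<n. \<bar>a k\<bar>) / e ^ n * t ^ n"
      unfolding p_def using e by (intro abs_polynomial_le_power) auto
    also have "\<dots> \<le> K' * t ^ n" using e \<open>e \<le> t\<close> by (intro mult_right_mono) (auto simp: K'_def)
    finally show "\<bar>p t\<bar> \<le> K' * t ^ n" .
  qed
  define H where "H = (\<integral>t. \<bar>g t\<bar> \<partial>lborel)"
  have H0: "H \<ge> 0" unfolding H_def by simp
  define M where "M = K' * fact n + ((n+1) / e) ^ (n+1) * H"
  have "\<bar>(\<integral>t. exp (-(z*t)) * g t \<partial>lborel) - (\<Sum>k<n. a k * fact k / z ^ (k+1))\<bar> \<le> M / z ^ (n+1)"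
    if z: "z > 0" for z
  proof -
    define r where "r = (\<lambda>t. exp (-(z*t)) * g t - exp (-(z*t)) * (indicator {0<..} t * p t))"
    define G where "G = (\<lambda>t. K' * (indicator {0<..} t * t ^ n * exp (-(z*t))) + exp (-(z*e)) * \<bar>g t\<bar>)"
    have "\<bar>exp (-(z*t)) * g t\<bar> \<le> \<bar>g t\<bar>" for t
      using z g0[of t] by (cases "t \<le> 0") (auto simp: abs_mult mult_left_le_one_le)
    then have Lg: "integrable lborel (\<lambda>t. exp (-(z*t)) * g t)"
      by (intro Bochner_Integration.integrable_bound[OF gi] AE_I2) auto
    note Lp = Laplace_polynomial[OF z, of a n]
    have ri: "integrable lborel r" unfolding r_def p_def using Lg Lp(1) by simp
    have rv: "(\<integral>t. r t \<partial>lborel) =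
        (\<integral>t. exp (-(z*t)) * g t \<partial>lborel) - (\<Sum>k<n. a k * fact k / z ^ (k+1))"
      unfolding r_def p_def using Lg Lp by simp
    have Gi: "integrable lborel G"
      unfolding G_def using Laplace_power(1)[OF z, of n] gi by simp
    have Gv: "(\<integral>t. G t \<partial>lborel) = K' * fact n / z ^ (n+1) + exp (-(z*e)) * H"
      unfolding G_def H_def using Laplace_power[OF z, of n] gi by simp
    have rG: "\<bar>r t\<bar> \<le> G t" for t
      unfolding r_def G_def
    proof (rule abs_Laplace_remainder_le[OF z g0])
      show "\<bar>g t - p t\<bar> \<le> K' * t ^ n" if "0 < t" "t \<le> e"
        using e(4)[OF that] K'(1) that by (auto intro: order_trans mult_right_mono)
      show "\<bar>p t\<bar> \<le> K' * t ^ n" if "e < t" using K'(2) that by simp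
    qed
    have "\<bar>(\<integral>t. exp (-(z*t)) * g t \<partial>lborel) - (\<Sum>k<n. a k * fact k / z ^ (k+1))\<bar>
        \<le> (\<integral>t. G t \<partial>lborel)"
      unfolding rv[symmetric] by (rule integral_abs_bound_integral[OF ri Gi]) (use rG in auto)
    also have "\<dots> \<le> K' * fact n / z ^ (n+1) + ((n+1) / (z*e)) ^ (n+1) * H"
      unfolding Gv using exp_neg_le_power[of "z*e" "n+1"] z e H0
      by (intro add_left_mono mult_right_mono) auto
    also have "\<dots> = M / z ^ (n+1)"
      using z e by (simp add: M_def power_divide power_mult_distrib field_simps)
    finally show ?thesis .
  qed
  then show ?thesis by (rule that)
qed

definition binomial_taylor :: "real \<Rightarrow> nat \<Rightarrow> real \<Rightarrow> real" where
  "binomial_taylor b n t = (\<Sum>k<n. (b gchoose k) * (-t) ^ k)"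

definition binomial_laplace :: "real \<Rightarrow> nat \<Rightarrow> real \<Rightarrow> real" where
  "binomial_laplace b n z = (\<Sum>k<n. (b gchoose k) * (-1) ^ k * fact k / z ^ (k+1))"

lemma binomial_taylor_measurable [measurable]: "binomial_taylor b n \<in> borel_measurable borel"
  unfolding binomial_taylor_def by measurable

lemma binomial_taylor_altdef: "binomial_taylor b n t = (\<Sum>k<n. (b gchoose k) * (-1) ^ k * t ^ k)"
  unfolding binomial_taylor_def by (simp add: power_minus[of t] mult.assoc)

lemma binomial_taylor_remainder_bigo:
  "(\<lambda>t. (1 - t) powr b - binomial_taylor b n t) \<in> O[at_right 0](\<lambda>t. t ^ n)"
proof (rule bigoI_tendsto)
  define d where "d = (\<lambda>k. (b gchoose k) * (-1) ^ k)"
  define R where "R = (\<lambda>t. (1 - t) powr b - binomial_taylor b n t)"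
  have "(\<lambda>k. d (k + n) * t ^ k) sums (R t / t ^ n)" if t: "t \<noteq> 0" "norm t < 1" for t :: real
  proof -
    have "(\<lambda>k. (b gchoose k) * (-t) ^ k) sums (1 + (-t)) powr b"
      using gen_binomial_real[of "-t" b] t by simp
    then have "(\<lambda>k. d k * t ^ k) sums (1 - t) powr b"
      by (simp add: d_def power_minus[of t] mult.assoc)
    from sums_divide[OF sums_split_initial_segment[OF this, of n], of "t ^ n"]
    have "(\<lambda>k. d (k + n) * t ^ (k + n) / t ^ n) sums (R t / t ^ n)"
      by (simp add: R_def binomial_taylor_altdef d_def mult.assoc)
    moreover have "d (k + n) * t ^ (k + n) / t ^ n = d (k + n) * t ^ k" for k
      using t by (simp add: power_add)
    ultimately show ?thesis by simp
  qed
  from powser_limit_0_strong[of 1, OF _ this]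
  have "((\<lambda>t. R t / t ^ n) \<longlongrightarrow> d n) (at 0)"
    by simp
  then show "((\<lambda>t. ((1 - t) powr b - binomial_taylor b n t) / t ^ n) \<longlongrightarrow> d n) (at_right 0)"
    unfolding R_def by (rule filterlim_mono[OF _ order_refl at_within_le_at])
  show "eventually (\<lambda>t::real. t ^ n \<noteq> 0) (at_right 0)"
    using eventually_at_right_less[of "0::real"] by eventually_elim simp
qed

lemma Laplace_binomial_taylor:
  assumes "z > 0"
  shows "integrable lborel (\<lambda>t. exp (-(z*t)) * (indicator {0<..} t * binomial_taylor b n t))"
        "(\<integral>t. exp (-(z*t)) * (indicator {0<..} t * binomial_taylor b n t) \<partial>lborel)
           = binomial_laplace b n z"
  using Laplace_polynomial[OF assms, of "\<lambda>k. (b gchoose k) * (-1) ^ k" n]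
  by (simp_all add: binomial_taylor_altdef binomial_laplace_def)

lemma beta_laplace_expansion:
  assumes "b > -1"
  obtains M where "\<And>z. z > 0 \<Longrightarrow> \<bar>beta_laplace b z - binomial_laplace b n z\<bar> \<le> M / z ^ (n+1)"
proof -
  have "eventually (\<lambda>t. (1 - t) powr b - binomial_taylor b n t =
      beta_weight b t - (\<Sum>k<n. (b gchoose k) * (-1) ^ k * t ^ k)) (at_right 0)"
    unfolding eventually_at_right_field
    by (intro exI[of _ 1]) (simp add: beta_weight_def binomial_taylor_altdef)
  from landau_o.big.in_cong[OF this, THEN iffD1, OF binomial_taylor_remainder_bigo]
  have "(\<lambda>t. beta_weight b t - (\<Sum>k<n. (b gchoose k) * (-1) ^ k * t ^ k)) \<in> O[at_right 0](\<lambda>t. t ^ n)" .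
  from Watson_lemma[OF integrable_beta_weight[OF assms] _ this] obtain M where
    "\<And>z. z > 0 \<Longrightarrow> \<bar>beta_laplace b z - binomial_laplace b n z\<bar> \<le> M / z ^ (n+1)"
    unfolding beta_laplace_def binomial_laplace_def by (auto simp: beta_weight_def)
  then show ?thesis by (rule that)
qed

section \<open>Regularised Beta integrals\<close>

lemma integrable_powr_binomial_remainder:
  assumes b: "b > -1" and w: "0 \<le> w" "w < real n + 1"
  shows "integrable lborel
    (\<lambda>t. t powr (-w) * (beta_weight b t - indicator {0<..<1} t * binomial_taylor b n t))"
proof -
  obtain e K where e: "0 < e" "e < 1" and "K > 0"
    and K: "\<And>t. 0 < t \<Longrightarrow> t \<le> e \<Longrightarrow> \<bar>(1 - t) powr b - binomial_taylor b n t\<bar> \<le> K * t ^ n"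
    using bigo_at_right_0_bound[OF binomial_taylor_remainder_bigo] by blast
  define P where "P = (\<Sum>k<n. \<bar>(b gchoose k) * (-1) ^ k\<bar>) / e ^ n"
  have P: "\<bar>binomial_taylor b n t\<bar> \<le> P" if "e \<le> t" "t < 1" for t
  proof -
    have "\<bar>binomial_taylor b n t\<bar> \<le> P * t ^ n"
      unfolding binomial_taylor_altdef P_def using e that by (intro abs_polynomial_le_power) auto
    also have "\<dots> \<le> P * 1"
      using that e by (intro mult_left_mono power_le_one) (auto simp: P_def)
    finally show ?thesis by simp
  qed
  define g where "g = (\<lambda>t. K * (t powr (real n - w) * beta_weight 0 t)
                         + e powr (-w) * (beta_weight b t + P * beta_weight 0 t))"
  have gi: "integrable lborel g" unfolding g_def
    using Beta_integral_beta_weight(1)[of "real n - w" 0] integrable_beta_weight[of 0]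
          integrable_beta_weight[OF b] w
    by (intro Bochner_Integration.integrable_add integrable_mult_right) auto
  show ?thesis
  proof (rule Bochner_Integration.integrable_bound[OF gi _ AE_I2])
    fix t :: real
    consider "t \<le> 0 \<or> 1 \<le> t" | "0 < t" "t \<le> e" | "e < t" "t < 1" by linarith
    then show "norm (t powr (-w) * (beta_weight b t - indicator {0<..<1} t * binomial_taylor b n t))
               \<le> norm (g t)"
    proof cases
      case 1
      have "0 \<le> g t" unfolding g_def using 1 by (auto simp: beta_weight_def)
      then show ?thesis using 1 by (auto simp: beta_weight_def)
    next
      case 2
      have "\<bar>t powr (-w) * ((1 - t) powr b - binomial_taylor b n t)\<bar> \<le> t powr (-w) * (K * t ^ n)"
        using K[OF 2] by (simp add: abs_mult mult_left_mono)
      also have "\<dots> = K * t powr (real n - w)"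
        using 2 by (simp add: powr_diff powr_minus powr_realpow divide_inverse mult_ac)
      also have "\<dots> \<le> g t"
        using 2 e P[of e] by (simp add: g_def beta_weight_def add_nonneg_nonneg)
      finally show ?thesis using 2 e by (simp add: beta_weight_def)
    next
      case 3
      have "t powr (-w) \<le> e powr (-w)" using 3 e w by (intro powr_mono2') auto
      moreover have "\<bar>(1 - t) powr b - binomial_taylor b n t\<bar> \<le> (1 - t) powr b + P"
        using P[of t] 3 powr_ge_zero[of "1 - t" b] by linarith
      ultimately have "\<bar>t powr (-w) * ((1 - t) powr b - binomial_taylor b n t)\<bar>
          \<le> e powr (-w) * ((1 - t) powr b + P)"
        unfolding abs_mult by (intro mult_mono) auto
      also have "\<dots> \<le> g t"
        using 3 e \<open>K > 0\<close> by (simp add: g_def beta_weight_def)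
      finally show ?thesis using 3 e by (simp add: beta_weight_def)
    qed
  qed measurable
qed

lemma nonpos_Ints_gt_minus_two:
  fixes x :: real
  assumes "x \<in> \<int>\<^sub>\<le>\<^sub>0" "-2 < x"
  shows "x = 0 \<or> x = -1"
proof -
  obtain n :: int where "x = of_int n" "n \<le> 0" using assms(1) by (elim nonpos_Ints_cases)
  moreover have "-2 < n" using assms(2) \<open>x = of_int n\<close> by linarith
  ultimately show ?thesis by (cases "n = 0") auto
qed

lemma Beta_plus2_left:
  fixes a b :: real
  assumes "a \<notin> \<int>\<^sub>\<le>\<^sub>0" "a + 1 \<notin> \<int>\<^sub>\<le>\<^sub>0"
  shows "(a + b) * (a + b + 1) * Beta (a + 2) b = a * (a + 1) * Beta a b"
proof -
  have e1: "(a + b + 1) * Beta (a + 2) b = (a + 1) * Beta (a + 1) b"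
    using Beta_plus1_left[OF assms(2), of b] by (simp add: add_ac)
  have e2: "(a + b) * Beta (a + 1) b = a * Beta a b"
    by (rule Beta_plus1_left[OF assms(1)])
  have "(a + b) * (a + b + 1) * Beta (a + 2) b = (a + b) * ((a + 1) * Beta (a + 1) b)"
    by (simp only: mult.assoc e1)
  also have "\<dots> = (a + 1) * (a * Beta a b)"
    by (simp only: mult.left_commute[of "a + b"] e2)
  finally show ?thesis by (simp only: mult_ac)
qed

text \<open>The ansatz \<open>t\<^sup>a (P(t) (1 - t)\<^sup>b\<^sup>+\<^sup>1 + Q(t))\<close> with linear \<open>P\<close>, \<open>Q\<close> for a primitive of
  \<open>t\<^sup>a\<^sup>-\<^sup>1 ((1 - t)\<^sup>b - 1 + b t)\<close> modulo a multiple of the Beta integrand \<open>t\<^sup>a\<^sup>+\<^sup>1 (1 - t)\<^sup>b\<close>.\<close>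
definition beta_remainder_primitive :: "real \<Rightarrow> real \<Rightarrow> real \<Rightarrow> real" where
  "beta_remainder_primitive a b t =
     t powr a * ((1/a + (a+b+1)/(a*(a+1)) * t) * (1-t) powr (b+1) - 1/a + b/(a+1) * t)"

lemma beta_remainder_primitive_has_derivative:
  fixes a b t :: real
  assumes a: "a \<noteq> 0" "a \<noteq> -1" and t: "0 < t" "t < 1"
  shows "(beta_remainder_primitive a b has_real_derivative
           t powr (a-1) * ((1-t) powr b - 1 + b*t)
           - (a+b+1)*(a+b+2)/(a*(a+1)) * (t powr (a+1) * (1-t) powr b)) (at t)"
proof -
  define A where "A = 1/a"
  define B where "B = (a+b+1)/(a*(a+1))"
  define C where "C = -b/(a+1)"
  define c where "c = (a+b+1)*(a+b+2)/(a*(a+1))"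
  have a1: "a + 1 \<noteq> 0" using a by auto
  have G: "beta_remainder_primitive a b = (\<lambda>t. t powr a * ((A + B*t) * (1-t) powr (b+1) - A - C*t))"
    by (simp add: fun_eq_iff beta_remainder_primitive_def A_def B_def C_def)
  have alg: "(a * X) * ((A + B*t) * ((1-t) * Y) - A - C*t) +
      (t * X) * (B * ((1-t) * Y) + (A + B*t) * (-((b+1) * Y)) - C)
      = X * (Y - 1 + b*t) - c * (t * t * X * Y)" for X Y :: real
  proof -
    have "a * (A + B*t) * (1-t) + t*B*(1-t) - (b+1)*t*(A+B*t) = 1 - c*t*t"
      using a a1 unfolding A_def B_def c_def by (simp add: divide_simps) (simp add: algebra_simps)
    moreover have "- a*A - (a+1)*C*t = -1 + b*t"
      using a a1 unfolding A_def C_def by (simp add: divide_simps)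
    ultimately show ?thesis by algebra
  qed
  have "(beta_remainder_primitive a b has_real_derivative
      (a * t powr (a-1)) * ((A + B*t) * (1-t) powr (b+1) - A - C*t) +
      t powr a * (B * (1-t) powr (b+1) + (A + B*t) * (-((b+1) * (1-t) powr (b+1-1))) - C)) (at t)"
    unfolding G using t by (auto intro!: derivative_eq_intros simp: field_simps)
  moreover have "t powr a = t * t powr (a-1)"
    using t by (simp add: powr_diff field_simps powr_minus)
  moreover have "(1-t) powr (b+1) = (1-t) * (1-t) powr b" using t by (simp add: powr_add)
  moreover have "t powr (a+1) = t * t powr a" using t by (simp add: powr_add add.commute)
  ultimately show ?thesis
    using alg[where X="t powr (a-1)" and Y="(1-t) powr b"] by (simp add: c_def mult.assoc)
qed

lemma beta_remainder_primitive_at_right_0: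
  fixes a b :: real
  assumes a: "-2 < a" "a \<noteq> 0" "a \<noteq> -1"
  shows "(beta_remainder_primitive a b \<longlongrightarrow> 0) (at_right 0)"
proof -
  define A where "A = 1/a"
  define B where "B = (a+b+1)/(a*(a+1))"
  have "(\<lambda>t::real. (1-t) powr (b+1) - 1 + (b+1)*t) \<in> O[at_right 0](\<lambda>t. t^2)"
       "(\<lambda>t::real. t*((1-t) powr (b+1) - 1)) \<in> O[at_right 0](\<lambda>t. t^2)"
    by real_asymp+
  then have "(\<lambda>t. A * ((1-t) powr (b+1) - 1 + (b+1)*t) + B * (t*((1-t) powr (b+1) - 1)))
      \<in> O[at_right 0](\<lambda>t. t^2)"
    by (intro sum_in_bigo) simp_all
  also have "(\<lambda>t. A * ((1-t) powr (b+1) - 1 + (b+1)*t) + B * (t*((1-t) powr (b+1) - 1)))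
      = (\<lambda>t. (1/a + (a+b+1)/(a*(a+1)) * t) * (1-t) powr (b+1) - 1/a + b/(a+1) * t)"
  proof -
    have "a + 1 \<noteq> 0" using a by auto
    then have C: "b/(a+1) = A*(b+1) - B"
      using a unfolding A_def B_def by (simp add: divide_simps) (simp add: algebra_simps)
    show ?thesis unfolding A_def[symmetric] B_def[symmetric] C by (simp add: fun_eq_iff algebra_simps)
  qed
  finally obtain e K where e: "0 < e" "e < 1" "K > 0" "\<And>t. 0 < t \<Longrightarrow> t \<le> e \<Longrightarrow>
      \<bar>(1/a + (a+b+1)/(a*(a+1)) * t) * (1-t) powr (b+1) - 1/a + b/(a+1) * t\<bar> \<le> K * t^2"
    by (rule bigo_at_right_0_bound) blast
  have "eventually (\<lambda>t. norm (beta_remainder_primitive a b t) \<le> K * t powr (a+2)) (at_right 0)"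
    unfolding eventually_at_right_field
  proof (intro exI[of _ e] conjI allI impI)
    fix t :: real assume t: "0 < t" "t < e"
    have "norm (beta_remainder_primitive a b t) \<le> t powr a * (K * t^2)"
      using e(4)[of t] t by (simp add: beta_remainder_primitive_def abs_mult mult_left_mono)
    also have "\<dots> = K * t powr (a+2)"
      using t by (simp add: powr_add powr_numeral)
    finally show "norm (beta_remainder_primitive a b t) \<le> K * t powr (a+2)" .
  qed (use e in auto)
  moreover have "((\<lambda>t. K * t powr (a+2)) \<longlongrightarrow> 0) (at_right 0)"
    using a by real_asymp
  ultimately show ?thesis by (rule Lim_null_comparison)
qed

lemma beta_remainder_primitive_at_left_1:
  fixes a b :: real
  assumes "b > -1"
  shows "(beta_remainder_primitive a b \<longlongrightarrow> -1/a + b/(a+1)) (at_left 1)"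
proof -
  have "((\<lambda>t::real. (1-t) powr (b+1)) \<longlongrightarrow> 0) (at_left 1)"
       "((\<lambda>t::real. t powr a) \<longlongrightarrow> 1) (at_left 1)"
    using assms by real_asymp+
  then have "(beta_remainder_primitive a b \<longlongrightarrow>
      1 * ((1/a + (a+b+1)/(a*(a+1)) * 1) * 0 - 1/a + b/(a+1) * 1)) (at_left 1)"
    unfolding beta_remainder_primitive_def by (intro tendsto_intros) auto
  then show ?thesis by simp
qed

text \<open>The factor \<open>c\<close> turns \<open>B(a + 2, b + 1)\<close> into the continued Beta function \<open>B(a, b + 1)\<close>.\<close>
lemma has_integral_Beta_remainder2:
  fixes a b :: real
  assumes b: "b > -1" and a: "-2 < a" "a < 1" "a \<noteq> 0" "a \<noteq> -1"
  shows "((\<lambda>t. t powr (a-1) * ((1-t) powr b - 1 + b*t)) has_integral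
           Beta a (b+1) - 1/a + b/(a+1)) {0..1}"
proof -
  define G where "G = beta_remainder_primitive a b"
  define c where "c = (a+b+1)*(a+b+2)/(a*(a+1))"
  have a1: "a + 1 \<noteq> 0" using a by auto
  note deriv = beta_remainder_primitive_has_derivative[OF a(3,4), of _ b, folded G_def c_def]
  have G01: "G 0 = 0" "G 1 = -1/a + b/(a+1)"
    using b by (simp_all add: G_def beta_remainder_primitive_def)
  have "continuous_on {0..1} G"
    using beta_remainder_primitive_at_right_0[OF a(1,3,4), of b]
      beta_remainder_primitive_at_left_1[OF b, of a]
    by (intro continuous_on_IccI)
       (auto simp: G_def G01 [unfolded G_def] simp flip: isCont_def intro!: DERIV_isCont deriv[unfolded G_def])
  then have "((\<lambda>t. t powr (a-1) * ((1-t) powr b - 1 + b*t) - c * (t powr (a+1) * (1-t) powr b))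
      has_integral (G 1 - G 0)) {0..1}"
    by (intro fundamental_theorem_of_calculus_interior)
       (use deriv in \<open>auto simp: has_real_derivative_iff_has_vector_derivative[symmetric]\<close>)
  moreover have "((\<lambda>t. t powr (a+2-1) * (1-t) powr (b+1-1)) has_integral Beta (a+2) (b+1)) {0..1}"
    by (rule has_integral_Beta_real) (use a b in auto)
  ultimately have "((\<lambda>t. t powr (a-1) * ((1-t) powr b - 1 + b*t) - c * (t powr (a+1) * (1-t) powr b)
      + c * (t powr (a+2-1) * (1-t) powr (b+1-1))) has_integral
          (G 1 - G 0 + c * Beta (a+2) (b+1))) {0..1}"
    by (intro has_integral_add has_integral_mult_right)
  moreover have "c * Beta (a+2) (b+1) = Beta a (b+1)"
  proof -
    have "a \<notin> \<int>\<^sub>\<le>\<^sub>0" "a + 1 \<notin> \<int>\<^sub>\<le>\<^sub>0"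
      using a nonpos_Ints_gt_minus_two[of a] nonpos_Ints_gt_minus_two[of "a + 1"] by auto
    from Beta_plus2_left[OF this, of "b + 1"]
    have "(a+b+1) * (a+b+2) * Beta (a+2) (b+1) = a * (a+1) * Beta a (b+1)"
      by (simp add: add_ac)
    then have "c * Beta (a+2) (b+1) = a * (a+1) * Beta a (b+1) / (a * (a+1))"
      by (simp add: c_def)
    then show ?thesis using a a1 by simp
  qed
  ultimately show ?thesis by (simp add: G01 algebra_simps add.commute[of 2 a])
qed

lemma has_integral_Beta_remainder:
  fixes a b :: real
  assumes b: "b > -1" and n: "n \<le> 2" and a: "-real n < a" "a < 1" "a \<noteq> 0" "a \<noteq> -1"
  shows "((\<lambda>t. t powr (a-1) * ((1-t) powr b - binomial_taylor b n t)) has_integral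
           Beta a (b+1) - (\<Sum>k<n. (b gchoose k) * (-1) ^ k / (a + k))) {0..1}"
proof -
  consider "n = 0" | "n = 1" | "n = 2" using n by linarith
  then show ?thesis
  proof cases
    case 1
    have "((\<lambda>t. t powr (a-1) * (1-t) powr (b+1-1)) has_integral Beta a (b+1)) {0..1}"
      by (rule has_integral_Beta_real) (use 1 a b in auto)
    then show ?thesis using 1 by (simp add: binomial_taylor_def)
  next
    case 2
    have "((\<lambda>t. t powr (a-1) * ((1-t) powr b - 1 + b*t) - b * t powr a) has_integral
        Beta a (b+1) - 1/a + b/(a+1) - b * (1 powr (a+1) / (a+1))) {0..1}"
      using 2 a b
      by (intro has_integral_diff has_integral_Beta_remainder2 has_integral_mult_right
                has_integral_powr_from_0) auto
    then have "((\<lambda>t. t powr (a-1) * ((1-t) powr b - 1 + b*t) - b * t powr a) has_integral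
        Beta a (b+1) - 1/a) (cbox 0 1)"
      by simp
    then have "((\<lambda>t. t powr (a-1) * ((1-t) powr b - 1)) has_integral Beta a (b+1) - 1/a) (cbox 0 1)"
    proof (rule has_integral_spike_interior)
      fix t :: real assume "t \<in> box 0 1"
      then have "t powr a = t powr (a-1) * t" by (simp add: powr_diff powr_minus field_simps)
      then show "t powr (a-1) * ((1-t) powr b - 1) = t powr (a-1) * ((1-t) powr b - 1 + b*t) - b * t powr a"
        by (simp add: algebra_simps)
    qed
    then show ?thesis using 2 by (simp add: binomial_taylor_def)
  next
    case 3
    then have "(\<lambda>t. t powr (a-1) * ((1-t) powr b - binomial_taylor b n t)) =
        (\<lambda>t. t powr (a-1) * ((1-t) powr b - 1 + b*t))"
      by (simp add: fun_eq_iff binomial_taylor_def numeral_2_eq_2 algebra_simps)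
    moreover have "Beta a (b+1) - (\<Sum>k<n. (b gchoose k) * (-1) ^ k / (a + k)) =
        Beta a (b+1) - 1/a + b/(a+1)"
      using 3 by (simp add: numeral_2_eq_2 add.commute)
    ultimately show ?thesis
      using has_integral_Beta_remainder2[OF b, of a] 3 a by (simp only:) simp
  qed
qed

text \<open>Subtracting the Taylor polynomial of degree \<open>n - 1\<close> continues the Beta integral
  \<open>\<integral>\<^sub>0\<^sup>1 t\<^sup>a\<^sup>-\<^sup>1 (1 - t)\<^sup>b dt\<close> to the strip \<open>-n < a < 1 - n\<close>, where Isabelle's \<open>Beta\<close>, defined
  through \<open>\<Gamma>\<close>, is already the analytic continuation.\<close>
lemma regularized_Beta_integral:
  fixes a b :: real
  assumes b: "b > -1" and n: "n \<le> 2" and a: "-real n < a" "a < 1 - real n"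
  shows "integrable lborel
           (\<lambda>t. t powr (a-1) * (beta_weight b t - indicator {0<..} t * binomial_taylor b n t))"
    and "(\<integral>t. t powr (a-1) * (beta_weight b t - indicator {0<..} t * binomial_taylor b n t) \<partial>lborel)
           = Beta a (b+1)"
proof -
  have "n = 0 \<or> n = 1 \<or> n = 2" using n by auto
  with a have a01: "a \<noteq> 0" "a \<noteq> -1" by auto
  define c where "c = (\<lambda>k. (b gchoose k) * (-1) ^ k)"
  define f1 where "f1 = (\<lambda>t. t powr (a-1) * (beta_weight b t - indicator {0<..<1} t * binomial_taylor b n t))"
  define f2 where "f2 = (\<lambda>t. \<Sum>k<n. c k * (indicator {1..} t * t powr (a - 1 + k)))"
  have split: "t powr (a-1) * (beta_weight b t - indicator {0<..} t * binomial_taylor b n t) = f1 t - f2 t"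
    for t
  proof (cases "t < 1")
    case True
    then show ?thesis by (auto simp: f1_def f2_def beta_weight_def indicator_def)
  next
    case False
    then have "t powr (a-1) * binomial_taylor b n t = (\<Sum>k<n. c k * t powr (a - 1 + k))"
      unfolding binomial_taylor_altdef c_def sum_distrib_left
      by (intro sum.cong refl) (simp add: powr_add powr_realpow mult_ac)
    then show ?thesis using False
      by (simp add: f1_def f2_def beta_weight_def)
  qed
  have I1: "integrable lborel f1"
    using integrable_powr_binomial_remainder[OF b, of "1 - a" n] a by (simp add: f1_def)
  have "((\<lambda>t. t powr (a-1) * ((1-t) powr b - binomial_taylor b n t)) has_integral
           Beta a (b+1) - (\<Sum>k<n. c k / (a + k))) {0..1}"
    using has_integral_Beta_remainder[OF b n] a a01 by (simp add: c_def)
  then have "((\<lambda>t. t powr (a-1) * ((1-t) powr b - binomial_taylor b n t)) has_integral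
           Beta a (b+1) - (\<Sum>k<n. c k / (a + k))) (cbox 0 1)"
    by simp
  then have "(f1 has_integral Beta a (b+1) - (\<Sum>k<n. c k / (a + k))) (cbox 0 1)"
  proof (rule has_integral_spike_interior)
    fix t :: real assume "t \<in> box 0 1"
    then show "f1 t = t powr (a-1) * ((1-t) powr b - binomial_taylor b n t)"
      by (simp add: f1_def beta_weight_def)
  qed
  moreover have "(\<integral>t. f1 t \<partial>lborel) = integral {0..1} f1"
    by (rule integral_lborel_eq_integral_Icc[OF I1]) (auto simp: f1_def beta_weight_def)
  ultimately have V1: "(\<integral>t. f1 t \<partial>lborel) = Beta a (b+1) - (\<Sum>k<n. c k / (a + k))"
    by (simp add: integral_unique)
  have p: "a - 1 + real k < -1" if "k < n" for k using that a by linarith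
  note tail = powr_integral_atLeast[OF p, of _ 1]
  have I2: "integrable lborel f2"
    unfolding f2_def using tail by (auto intro!: Bochner_Integration.integrable_sum integrable_mult_right)
  have "(\<integral>t. f2 t \<partial>lborel) = (\<Sum>k<n. c k * (\<integral>t. indicator {1..} t * t powr (a - 1 + k) \<partial>lborel))"
    unfolding f2_def using tail by (subst Bochner_Integration.integral_sum) auto
  also have "\<dots> = (\<Sum>k<n. - (c k / (a + k)))"
    using tail by (intro sum.cong refl) auto
  finally have V2: "(\<integral>t. f2 t \<partial>lborel) = - (\<Sum>k<n. c k / (a + k))"
    by (simp add: sum_negf)
  show "integrable lborel
          (\<lambda>t. t powr (a-1) * (beta_weight b t - indicator {0<..} t * binomial_taylor b n t))"
    unfolding split using I1 I2 by simp
  show "(\<integral>t. t powr (a-1) * (beta_weight b t - indicator {0<..} t * binomial_taylor b n t) \<partial>lborel)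
           = Beta a (b+1)"
    unfolding split using I1 I2 V1 V2 by simp
qed

section \<open>The constant term\<close>

lemma beta_laplace_regularized_Mellin:
  fixes b w :: real
  assumes b: "b > -1" and n: "n \<le> 2" and w: "real n < w" "w < real n + 1"
  shows "integrable lborel
           (\<lambda>z. indicator {0<..} z * z powr (w-1) * (beta_laplace b z - binomial_laplace b n z))"
    and "(\<integral>z. indicator {0<..} z * z powr (w-1) * (beta_laplace b z - binomial_laplace b n z) \<partial>lborel)
           = Gamma w * Beta (1-w) (b+1)"
proof -
  define k where "k = (\<lambda>t. beta_weight b t - indicator {0<..} t * binomial_taylor b n t)"
  have k0: "k t = 0" if "t \<le> 0" for t using that by (simp add: k_def beta_weight_def)
  note R = regularized_Beta_integral[OF b n, of "1 - w"]
  have ki: "integrable lborel (\<lambda>t. t powr (-w) * k t)"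
    and kv: "(\<integral>t. t powr (-w) * k t \<partial>lborel) = Beta (1-w) (b+1)"
    using R w by (simp_all add: k_def)
  have Laplace_k: "(\<integral>t. exp (-(z*t)) * k t \<partial>lborel) = beta_laplace b z - binomial_laplace b n z"
    if z: "z > 0" for z
  proof -
    have "(\<lambda>t. exp (-(z*t)) * k t) =
        (\<lambda>t. exp (-(z*t)) * beta_weight b t - exp (-(z*t)) * (indicator {0<..} t * binomial_taylor b n t))"
      by (simp add: fun_eq_iff k_def algebra_simps)
    then show ?thesis
      using integrable_Laplace_beta_weight[OF b, of z] Laplace_binomial_taylor[OF z, of b n] z
      by (simp add: beta_laplace_def)
  qed
  have eq: "(\<lambda>z. indicator {0<..} z * z powr (w-1) * (\<integral>t. exp (-(z*t)) * k t \<partial>lborel)) =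
      (\<lambda>z. indicator {0<..} z * z powr (w-1) * (beta_laplace b z - binomial_laplace b n z))"
    by (simp add: fun_eq_iff indicator_def Laplace_k)
  have w0: "w > 0" using w by simp
  have km: "k \<in> borel_measurable borel" unfolding k_def by measurable
  note M = Mellin_of_Laplace[OF w0 km k0 ki]
  show "integrable lborel
           (\<lambda>z. indicator {0<..} z * z powr (w-1) * (beta_laplace b z - binomial_laplace b n z))"
    using M(1) unfolding eq .
  show "(\<integral>z. indicator {0<..} z * z powr (w-1) * (beta_laplace b z - binomial_laplace b n z) \<partial>lborel)
           = Gamma w * Beta (1-w) (b+1)"
    using M(2) unfolding eq kv .
qed

lemma Gamma_reflection_real:
  fixes x :: real
  shows "Gamma x * Gamma (1 - x) = pi / sin (pi * x)"
proof -
  have "complex_of_real (Gamma x * Gamma (1 - x)) =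
      Gamma (complex_of_real x) * Gamma (1 - complex_of_real x)"
    by (simp add: Gamma_complex_of_real[symmetric])
  also have "\<dots> = of_real pi / sin (of_real pi * of_real x)"
    by (rule Gamma_reflection_complex)
  also have "\<dots> = complex_of_real (pi / sin (pi * x))"
    by (simp flip: sin_of_real)
  finally show ?thesis by (simp only: of_real_eq_iff)
qed

lemma Gamma_Beta_reflection:
  fixes b :: real
  assumes "-1 < b" "b < 1/2" "b \<noteq> 0" "b \<noteq> -1/2"
  shows "Gamma (2*b+2) * Beta (-1-2*b) (b+1) = - (Gamma (1+b))\<^sup>2 / (2 * cos (b * pi))"
proof -
  have s0: "sin (pi * b) \<noteq> 0"
  proof
    assume "sin (pi * b) = 0"
    then obtain i :: int where "b = of_int i" by (auto simp: sin_zero_iff_int2)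
    with assms show False by auto
  qed
  have c0: "cos (pi * b) \<noteq> 0"
  proof
    assume "cos (pi * b) = 0"
    then obtain i :: int where "odd i" "2 * b = of_int i" by (auto simp: cos_zero_iff_int field_simps)
    with assms have "i = -1 \<or> i = 0" by linarith
    with \<open>odd i\<close> \<open>2 * b = of_int i\<close> assms show False by auto
  qed
  have r1: "Gamma (2*b+2) * Gamma (-1-2*b) = pi / (2 * sin (pi*b) * cos (pi*b))"
  proof -
    have "sin (pi * (2*b+2)) = sin (2 * (pi*b))"
      using sin_periodic[of "2 * (pi*b)"] by (simp add: algebra_simps)
    then show ?thesis using Gamma_reflection_real[of "2*b+2"] by (simp add: sin_double)
  qed
  have r2: "Gamma (-b) * Gamma (1+b) = - pi / sin (pi*b)"
    using Gamma_reflection_real[of "-b"] by simp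
  have "Gamma (2*b+2) * Beta (-1-2*b) (b+1)
      = (Gamma (2*b+2) * Gamma (-1-2*b)) * Gamma (1+b) * Gamma (1+b) / (Gamma (-b) * Gamma (1+b))"
    using r2 s0 by (simp add: Beta_def field_simps)
  also have "\<dots> = - (Gamma (1+b))\<^sup>2 / (2 * cos (b * pi))"
    unfolding r1 r2 using s0 c0 by (simp add: field_simps power2_eq_square mult.commute)
  finally show ?thesis .
qed

lemma beta_laplace_regularized_moment:
  fixes b :: real
  assumes b: "-1 < b" "b < 1/2" "b \<noteq> 0" "b \<noteq> -1/2"
  obtains n where "n \<le> 2" "real n - 1 < 2 * b + 1" "2 * b + 1 < real n"
    "integrable lborel
       (\<lambda>z. indicator {0<..} z * z powr (2 * b + 1) * (beta_laplace b z - binomial_laplace b n z))"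
    "(\<integral>z. indicator {0<..} z * z powr (2 * b + 1) * (beta_laplace b z - binomial_laplace b n z) \<partial>lborel)
       = - (Gamma (1 + b))\<^sup>2 / (2 * cos (b * pi))"
proof -
  obtain n :: nat where n: "n \<le> 2" "real n - 1 < 2 * b + 1" "2 * b + 1 < real n"
  proof (cases "b < -1/2")
    case True
    then show ?thesis using b by (intro that[of 0]) auto
  next
    case False
    then show ?thesis using b by (cases "b < 0") (auto intro: that[of 1] that[of 2])
  qed
  have w: "real n < 2 * b + 2" "2 * b + 2 < real n + 1" using n by simp_all
  note R = beta_laplace_regularized_Mellin[OF b(1) n(1) w]
  have "Gamma (2 * b + 2) * Beta (1 - (2 * b + 2)) (b + 1) = - (Gamma (1 + b))\<^sup>2 / (2 * cos (b * pi))"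
    using Gamma_Beta_reflection[OF b] by simp
  with R n show ?thesis by (intro that[of n]) (simp_all add: add.commute)
qed

lemma Gamma_affine_has_derivative:
  fixes x c :: real
  assumes "x \<notin> \<int>\<^sub>\<le>\<^sub>0"
  shows "((\<lambda>e. Gamma (x + c * e)) has_real_derivative Gamma x * Digamma x * c) (at 0)"
proof (rule DERIV_chain2[of Gamma _ "\<lambda>e. x + c * e"])
  show "(Gamma has_real_derivative Gamma x * Digamma x) (at (x + c * 0))"
    using has_field_derivative_Gamma[OF assms] by simp
qed (auto intro!: derivative_eq_intros)

lemma Beta_half_pole_limit:
  "((\<lambda>e::real. Gamma (1 - e) * Beta e (1/2) - 1/e) \<longlongrightarrow> 2 * ln 2 + euler_mascheroni) (at_right 0)"
proof -
  define f where "f e = Gamma (1 + (-1) * e) * Gamma (1 + 1 * e) * Gamma (1/2) / Gamma (1/2 + 1 * e)"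
    for e :: real
  have nonpole: "(1::real) \<notin> \<int>\<^sub>\<le>\<^sub>0" "(1/2::real) \<notin> \<int>\<^sub>\<le>\<^sub>0"
    by (auto elim!: nonpos_Ints_cases)
  then have G: "Gamma (1/2::real) \<noteq> 0" by (simp add: Gamma_eq_zero_iff)
  note m = DERIV_mult[OF DERIV_mult[OF Gamma_affine_has_derivative[OF nonpole(1), of "-1"]
      Gamma_affine_has_derivative[OF nonpole(1), of 1]] DERIV_const[of "Gamma (1/2)"]]
  have "Gamma (1/2 + 1 * (0::real)) \<noteq> 0" using G by simp
  note q = DERIV_divide[OF m Gamma_affine_has_derivative[OF nonpole(2), of 1] this]
  have "(f has_real_derivative 2 * ln 2 + euler_mascheroni) (at 0)"
    unfolding f_def by (rule DERIV_cong[OF q]) (use G in \<open>simp add: Digamma_one_half field_simps\<close>)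
  then have "((\<lambda>e. (f e - f 0) / e) \<longlongrightarrow> 2 * ln 2 + euler_mascheroni) (at_right 0)"
    unfolding DERIV_def by (auto intro: filterlim_mono[OF _ order_refl at_within_le_at])
  moreover have "eventually (\<lambda>e. (f e - f 0) / e = Gamma (1 - e) * Beta e (1/2) - 1/e) (at_right 0)"
    unfolding eventually_at_right_field
  proof (intro exI[of _ 1] conjI allI impI)
    fix e :: real assume e: "0 < e" "e < 1"
    have "e \<notin> \<int>\<^sub>\<le>\<^sub>0" using e by (auto elim!: nonpos_Ints_cases)
    then have "Gamma (1 + e) = e * Gamma e" using Gamma_plus1[of e] by (simp add: add.commute)
    moreover have "Gamma (1/2 + e) > 0" using e by (intro Gamma_real_pos) simp
    ultimately show "(f e - f 0) / e = Gamma (1 - e) * Beta e (1/2) - 1/e"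
      using e G by (simp add: f_def Beta_def field_simps add.commute)
  qed simp
  ultimately show ?thesis by (rule Lim_transform_eventually)
qed

lemma beta_laplace_Mellin_minus_tail:
  fixes b w :: real
  assumes b: "b > -1" and w: "0 < w" "w < 1"
  shows "(\<integral>z. indicator {0<..} z * z powr (w-1) * (beta_laplace b z - indicator {1..} z / z) \<partial>lborel)
           = Gamma w * Beta (1-w) (b+1) - 1/(1-w)"
proof -
  note R = beta_laplace_regularized_Mellin[OF b, of 0 w]
  note T = powr_integral_atLeast[of "w-2" 1]
  have "indicator {0<..} z * z powr (w-1) * (beta_laplace b z - indicator {1..} z / z) =
      indicator {0<..} z * z powr (w-1) * (beta_laplace b z - binomial_laplace b 0 z)
      - indicator {1..} z * z powr (w-2)" for z
  proof (cases "1 \<le> z")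
    case True
    then have "z powr (w-2) = z powr (w-1) / z" using powr_diff[of z "w-1" 1] by simp
    then show ?thesis using True by (simp add: binomial_laplace_def algebra_simps)
  qed (auto simp: binomial_laplace_def)
  moreover have "1 / (w - 1) = - (1 / (1 - w))" by (simp add: divide_simps)
  ultimately show ?thesis using R T w by simp
qed

text \<open>Near \<open>0\<close> the integrand is at most \<open>\<phi>(0) z\<^sup>-\<^sup>1\<^sup>/\<^sup>2\<close>, and for \<open>z \<ge> 1\<close> Watson's lemma
  bounds \<open>\<phi>(z) - 1/z\<close> by \<open>O(z\<^sup>-\<^sup>2)\<close>.\<close>
lemma beta_laplace_Mellin_minus_tail_dominated:
  fixes b :: real
  assumes b: "b > -1"
  obtains g where "integrable lborel g"
    "\<And>v z. 1/2 \<le> v \<Longrightarrow> v \<le> 1 \<Longrightarrow>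
       \<bar>indicator {0<..} z * z powr (v-1) * (beta_laplace b z - indicator {1..} z / z)\<bar> \<le> g z"
proof -
  obtain M where "\<And>z. z > 0 \<Longrightarrow> \<bar>beta_laplace b z - binomial_laplace b 1 z\<bar> \<le> M / z ^ (1+1)"
    using beta_laplace_expansion[OF b] by blast
  then have M: "\<bar>beta_laplace b z - 1/z\<bar> \<le> M / z\<^sup>2" if "z > 0" for z
    using that by (simp add: binomial_laplace_def power2_eq_square)
  have M0: "M \<ge> 0" using M[of 1] by simp
  define H where "H = (\<integral>t. beta_weight b t \<partial>lborel)"
  have H: "0 \<le> beta_laplace b z" "beta_laplace b z \<le> H" if "z \<ge> 0" for z
    using beta_laplace_nonneg beta_laplace_le[OF b that] that by (auto simp: H_def)
  define g where "g z = indicator {0<..1} z * (H * z powr (-1/2)) + indicator {1..} z * (M * z powr (-2))"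
    for z :: real
  have "integrable lborel g"
    using powr_integral_greaterThanAtMost(1)[of "-1/2" 1] powr_integral_atLeast(1)[of "-2" 1]
    unfolding g_def by (simp add: mult.left_commute)
  moreover have "\<bar>indicator {0<..} z * z powr (v-1) * (beta_laplace b z - indicator {1..} z / z)\<bar> \<le> g z"
    if v: "1/2 \<le> v" "v \<le> 1" for v z
  proof -
    consider "z \<le> 0" | "0 < z" "z < 1" | "1 \<le> z" by linarith
    then show ?thesis
    proof cases
      case 1
      then show ?thesis using H[of 1] M0 by (simp add: g_def)
    next
      case 2
      have "\<bar>indicator {0<..} z * z powr (v-1) * (beta_laplace b z - indicator {1..} z / z)\<bar>
          = z powr (v-1) * beta_laplace b z" using 2 H[of z] by (simp add: abs_mult)
      also have "\<dots> \<le> z powr (-1/2) * H"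
        using 2 v H[of z] by (intro mult_mono powr_mono') auto
      finally show ?thesis using 2 by (simp add: g_def mult.commute)
    next
      case 3
      have "z powr (v-1) \<le> z powr 0" using 3 v by (intro powr_mono) auto
      moreover have "\<bar>indicator {0<..} z * z powr (v-1) * (beta_laplace b z - indicator {1..} z / z)\<bar>
          = z powr (v-1) * \<bar>beta_laplace b z - 1/z\<bar>"
        using 3 by (simp add: abs_mult)
      ultimately have "\<bar>indicator {0<..} z * z powr (v-1) * (beta_laplace b z - indicator {1..} z / z)\<bar>
          \<le> 1 * (M / z\<^sup>2)"
        using 3 M[of z] by (simp only:) (intro mult_mono, auto)
      also have "\<dots> = M * z powr (-2)" using 3 by (simp add: powr_minus divide_inverse)
      finally show ?thesis using 3 H[of 1] unfolding g_def by (simp add: add_increasing)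
    qed
  qed
  ultimately show ?thesis by (rule that)
qed

lemma beta_laplace_Mellin_minus_tail_tendsto:
  fixes b :: real and w :: "nat \<Rightarrow> real"
  assumes b: "b > -1" and w: "w \<longlonglongrightarrow> 1" "\<And>n. 1/2 \<le> w n" "\<And>n. w n \<le> 1"
  shows "integrable lborel (\<lambda>z. indicator {0<..} z * (beta_laplace b z - indicator {1..} z / z))"
    and "(\<lambda>n. \<integral>z. indicator {0<..} z * z powr (w n - 1) * (beta_laplace b z - indicator {1..} z / z) \<partial>lborel)
           \<longlonglongrightarrow> (\<integral>z. indicator {0<..} z * (beta_laplace b z - indicator {1..} z / z) \<partial>lborel)"
proof -
  define F where "F v z = indicator {0<..} z * z powr (v-1) * (beta_laplace b z - indicator {1..} z / z)"
    for v z :: real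
  obtain g where gi: "integrable lborel g" and F_le_g: "\<And>v z. 1/2 \<le> v \<Longrightarrow> v \<le> 1 \<Longrightarrow> \<bar>F v z\<bar> \<le> g z"
    using beta_laplace_Mellin_minus_tail_dominated[OF b] unfolding F_def by blast
  have Fm: "F v \<in> borel_measurable lborel" for v unfolding F_def by measurable
  have "integrable lborel (F 1)"
    by (rule Bochner_Integration.integrable_bound[OF gi Fm], intro AE_I2)
       (use F_le_g[of 1] in \<open>auto intro: order_trans[OF _ abs_ge_self]\<close>)
  moreover have "(\<lambda>n. \<integral>z. F (w n) z \<partial>lborel) \<longlonglongrightarrow> (\<integral>z. F 1 z \<partial>lborel)"
  proof (rule integral_dominated_convergence[OF Fm Fm gi])
    show "AE z in lborel. (\<lambda>n. F (w n) z) \<longlonglongrightarrow> F 1 z"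
    proof (rule AE_I2)
      fix z :: real
      show "(\<lambda>n. F (w n) z) \<longlonglongrightarrow> F 1 z"
      proof (cases "z > 0")
        case True
        have "(\<lambda>n. z powr (w n - 1)) \<longlonglongrightarrow> z powr (1 - 1)"
          using True w(1) by (intro tendsto_intros) auto
        then show ?thesis unfolding F_def by (intro tendsto_mult tendsto_const)
      qed (simp add: F_def)
    qed
    show "AE z in lborel. norm (F (w n) z) \<le> g z" for n
      using F_le_g w(2,3) by (intro AE_I2) auto
  qed
  moreover have "F 1 = (\<lambda>z. indicator {0<..} z * (beta_laplace b z - indicator {1..} z / z))"
    by (auto simp: fun_eq_iff F_def indicator_def)
  ultimately show
    "integrable lborel (\<lambda>z. indicator {0<..} z * (beta_laplace b z - indicator {1..} z / z))"
    "(\<lambda>n. \<integral>z. indicator {0<..} z * z powr (w n - 1) * (beta_laplace b z - indicator {1..} z / z) \<partial>lborel)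
       \<longlonglongrightarrow> (\<integral>z. indicator {0<..} z * (beta_laplace b z - indicator {1..} z / z) \<partial>lborel)"
    by (simp_all add: F_def)
qed

lemma beta_laplace_half_regularized_integral:
  shows "integrable lborel (\<lambda>z. indicator {0<..} z * (beta_laplace (-1/2) z - indicator {1..} z / z))"
    and "(\<integral>z. indicator {0<..} z * (beta_laplace (-1/2) z - indicator {1..} z / z) \<partial>lborel)
           = 2 * ln 2 + euler_mascheroni"
proof -
  define e where "e n = 1 / (real n + 2)" for n :: nat
  have e: "0 < e n" "e n \<le> 1/2" for n by (auto simp: e_def divide_simps)
  have lim: "(\<lambda>n. 1 - e n) \<longlonglongrightarrow> 1" unfolding e_def by real_asymp
  have w: "1/2 \<le> 1 - e n" "1 - e n \<le> 1" for n using e[of n] by auto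
  have "(-1/2::real) > -1" by simp
  note L = beta_laplace_Mellin_minus_tail_tendsto[OF this lim w]
  show "integrable lborel (\<lambda>z. indicator {0<..} z * (beta_laplace (-1/2) z - indicator {1..} z / z))"
    by (rule L(1))
  have "filterlim e (at_right 0) sequentially" unfolding e_def by real_asymp
  from filterlim_compose[OF Beta_half_pole_limit this]
  have "(\<lambda>n. Gamma (1 - e n) * Beta (e n) (1/2) - 1 / e n) \<longlonglongrightarrow> 2 * ln 2 + euler_mascheroni" .
  moreover have "(\<integral>z. indicator {0<..} z * z powr ((1 - e n) - 1) *
      (beta_laplace (-1/2) z - indicator {1..} z / z) \<partial>lborel) = Gamma (1 - e n) * Beta (e n) (1/2) - 1 / e n"
    for n using beta_laplace_Mellin_minus_tail[of "-1/2" "1 - e n"] e[of n] by simp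
  ultimately have "(\<lambda>n. \<integral>z. indicator {0<..} z * z powr ((1 - e n) - 1) *
      (beta_laplace (-1/2) z - indicator {1..} z / z) \<partial>lborel) \<longlonglongrightarrow> 2 * ln 2 + euler_mascheroni"
    by simp
  with L(2) e show "(\<integral>z. indicator {0<..} z * (beta_laplace (-1/2) z - indicator {1..} z / z) \<partial>lborel)
      = 2 * ln 2 + euler_mascheroni"
    by (auto intro: LIMSEQ_unique)
qed

lemma abs_integral_tail_le:
  fixes f Q :: "real \<Rightarrow> real" and d M T :: real and N :: nat
  assumes T: "T > 0" and dN: "d < real N"
    and i: "integrable lborel (\<lambda>z. indicator {T<..} z * (z powr d * (f z - Q z)))"
    and fQ: "\<And>z. z > 0 \<Longrightarrow> \<bar>f z - Q z\<bar> \<le> M / z ^ (N+1)"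
  shows "\<bar>\<integral>z. indicator {T<..} z * (z powr d * (f z - Q z)) \<partial>lborel\<bar> \<le> M * T powr (d - N) / (N - d)"
proof -
  have p: "d - real (N+1) < -1" using dN by simp
  note bound = powr_integral_greaterThan[OF p T]
  have "\<bar>\<integral>z. indicator {T<..} z * (z powr d * (f z - Q z)) \<partial>lborel\<bar>
      \<le> (\<integral>z. M * (indicator {T<..} z * z powr (d - real (N+1))) \<partial>lborel)"
  proof (rule integral_abs_bound_integral[OF i])
    show "integrable lborel (\<lambda>z. M * (indicator {T<..} z * z powr (d - real (N+1))))"
      using bound(1) by simp
    fix z :: real
    show "\<bar>indicator {T<..} z * (z powr d * (f z - Q z))\<bar>
        \<le> M * (indicator {T<..} z * z powr (d - real (N+1)))"
    proof (cases "z > T")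
      case True
      then have z0: "z > 0" using T by simp
      have "\<bar>z powr d * (f z - Q z)\<bar> = z powr d * \<bar>f z - Q z\<bar>" by (simp add: abs_mult)
      also have "\<dots> \<le> z powr d * (M / z ^ (N+1))" by (intro mult_left_mono fQ z0) simp
      also have "\<dots> = M * z powr (d - real (N+1))" by (rule powr_mult_div_power[OF z0])
      finally show ?thesis using True by simp
    qed simp
  qed
  also have "\<dots> = M * (\<integral>z. indicator {T<..} z * z powr (d - real (N+1)) \<partial>lborel)"
    by (rule integral_mult_right_zero)
  also have "\<dots> = M * (- (T powr (d - real (N+1) + 1)) / (d - real (N+1) + 1))"
    by (simp only: bound(2))
  also have "\<dots> = M * T powr (d - N) / (N - d)"
  proof -
    have "d - real N \<noteq> 0" "real N - d \<noteq> 0" using dN by auto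
    then show ?thesis by (simp add: field_simps)
  qed
  finally show ?thesis .
qed

lemma moment_split_regularized:
  fixes f S Q :: "real \<Rightarrow> real" and d C M T :: real and N :: nat
  assumes T: "T > 0" and dN: "d < real N"
    and fS: "integrable lborel (\<lambda>z. indicator {0<..} z * z powr d * (f z - S z))"
    and C: "(\<integral>z. indicator {0<..} z * z powr d * (f z - S z) \<partial>lborel) = C"
    and S: "integrable lborel (\<lambda>z. indicator {0<..T} z * (z powr d * S z))"
    and QS: "integrable lborel (\<lambda>z. indicator {T<..} z * (z powr d * (Q z - S z)))"
    and fQ: "\<And>z. z > 0 \<Longrightarrow> \<bar>f z - Q z\<bar> \<le> M / z ^ (N+1)"
  shows "\<bar>(\<integral>z. indicator {0<..T} z * (z powr d * f z) \<partial>lborel)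
            - ((\<integral>z. indicator {0<..T} z * (z powr d * S z) \<partial>lborel) + C
               - (\<integral>z. indicator {T<..} z * (z powr d * (Q z - S z)) \<partial>lborel))\<bar>
         \<le> M * T powr (d - N) / (N - d)"
proof -
  define F where "F = (\<lambda>z. indicator {0<..} z * z powr d * (f z - S z))"
  define G where "G = (\<lambda>z. indicator {T<..} z * (z powr d * (f z - Q z)))"
  have FA: "integrable lborel (\<lambda>z. indicator {0<..T} z * F z)"
    and FB: "integrable lborel (\<lambda>z. indicator {T<..} z * F z)"
    using integrable_mult_indicator[OF _ fS[folded F_def]] by simp_all
  have "C = (\<integral>z. indicator {0<..T} z * F z + indicator {T<..} z * F z \<partial>lborel)"
    unfolding C[symmetric] F_def using T
    by (intro Bochner_Integration.integral_cong) (auto simp: indicator_def)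
  also have "\<dots> = (\<integral>z. indicator {0<..T} z * F z \<partial>lborel) + (\<integral>z. indicator {T<..} z * F z \<partial>lborel)"
    using FA FB by simp
  finally have C_split: "C = \<dots>" .
  have head: "(\<integral>z. indicator {0<..T} z * (z powr d * f z) \<partial>lborel) =
      (\<integral>z. indicator {0<..T} z * (z powr d * S z) \<partial>lborel) + (\<integral>z. indicator {0<..T} z * F z \<partial>lborel)"
  proof -
    have "(\<lambda>z. indicator {0<..T} z * (z powr d * f z)) =
        (\<lambda>z. indicator {0<..T} z * (z powr d * S z) + indicator {0<..T} z * F z)"
      by (auto simp: fun_eq_iff F_def indicator_def algebra_simps)
    then show ?thesis using S FA by simp
  qed
  have GF: "(\<lambda>z. indicator {T<..} z * F z) = (\<lambda>z. indicator {T<..} z * (z powr d * (Q z - S z)) + G z)"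
    using T by (auto simp: fun_eq_iff F_def G_def indicator_def algebra_simps)
  have "G = (\<lambda>z. indicator {T<..} z * F z - indicator {T<..} z * (z powr d * (Q z - S z)))"
    using GF by (simp add: fun_eq_iff)
  then have Gi: "integrable lborel G" using FB QS by simp
  have tail: "(\<integral>z. indicator {T<..} z * F z \<partial>lborel) =
      (\<integral>z. indicator {T<..} z * (z powr d * (Q z - S z)) \<partial>lborel) + (\<integral>z. G z \<partial>lborel)"
    unfolding GF using QS Gi by simp
  have "\<bar>\<integral>z. G z \<partial>lborel\<bar> \<le> M * T powr (d - N) / (N - d)"
    unfolding G_def by (rule abs_integral_tail_le[OF T dN Gi[unfolded G_def] fQ])
  then show ?thesis unfolding head C_split tail by simp
qed

lemma power_sum_integral_greaterThanAtMost:
  fixes c :: "nat \<Rightarrow> real" and d T :: real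
  assumes T: "T \<ge> 0" and K: "finite K" "\<And>k. k \<in> K \<Longrightarrow> real k < d"
  shows "integrable lborel (\<lambda>z. indicator {0<..T} z * (z powr d * (\<Sum>k\<in>K. c k / z ^ (k+1))))"
    and "(\<integral>z. indicator {0<..T} z * (z powr d * (\<Sum>k\<in>K. c k / z ^ (k+1))) \<partial>lborel)
           = (\<Sum>k\<in>K. c k * T powr (d - k) / (d - k))"
proof -
  have eq: "(\<lambda>z. indicator {0<..T} z * (z powr d * (\<Sum>k\<in>K. c k / z ^ (k+1)))) =
      (\<lambda>z. \<Sum>k\<in>K. c k * (indicator {0<..T} z * z powr (d - real (k+1))))"
  proof
    fix z :: real
    show "indicator {0<..T} z * (z powr d * (\<Sum>k\<in>K. c k / z ^ (k+1))) =
        (\<Sum>k\<in>K. c k * (indicator {0<..T} z * z powr (d - real (k+1))))"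
    proof (cases "0 < z \<and> z \<le> T")
      case True
      then have z: "z > 0" and "indicator {0<..T} z = (1::real)" using T by auto
      then show ?thesis by (simp only: mult_1_left sum_distrib_left powr_mult_div_power[OF z])
    qed (auto simp: indicator_def)
  qed
  have p: "d - real (k+1) > -1" if "k \<in> K" for k using K(2)[OF that] by simp
  note I = powr_integral_greaterThanAtMost[OF p T]
  show "integrable lborel (\<lambda>z. indicator {0<..T} z * (z powr d * (\<Sum>k\<in>K. c k / z ^ (k+1))))"
    unfolding eq using I by (intro Bochner_Integration.integrable_sum integrable_mult_right) auto
  show "(\<integral>z. indicator {0<..T} z * (z powr d * (\<Sum>k\<in>K. c k / z ^ (k+1))) \<partial>lborel)
           = (\<Sum>k\<in>K. c k * T powr (d - k) / (d - k))"
    unfolding eq using I by (subst Bochner_Integration.integral_sum) (auto intro!: sum.cong)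
qed

lemma power_sum_integral_greaterThan:
  fixes c :: "nat \<Rightarrow> real" and d T :: real
  assumes T: "T > 0" and K: "finite K" "\<And>k. k \<in> K \<Longrightarrow> d < real k"
  shows "integrable lborel (\<lambda>z. indicator {T<..} z * (z powr d * (\<Sum>k\<in>K. c k / z ^ (k+1))))"
    and "(\<integral>z. indicator {T<..} z * (z powr d * (\<Sum>k\<in>K. c k / z ^ (k+1))) \<partial>lborel)
           = - (\<Sum>k\<in>K. c k * T powr (d - k) / (d - k))"
proof -
  have eq: "(\<lambda>z. indicator {T<..} z * (z powr d * (\<Sum>k\<in>K. c k / z ^ (k+1)))) =
      (\<lambda>z. \<Sum>k\<in>K. c k * (indicator {T<..} z * z powr (d - real (k+1))))"
  proof
    fix z :: real
    show "indicator {T<..} z * (z powr d * (\<Sum>k\<in>K. c k / z ^ (k+1))) =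
        (\<Sum>k\<in>K. c k * (indicator {T<..} z * z powr (d - real (k+1))))"
    proof (cases "T < z")
      case True
      then have z: "z > 0" and "indicator {T<..} z = (1::real)" using T by auto
      then show ?thesis by (simp only: mult_1_left sum_distrib_left powr_mult_div_power[OF z])
    qed (auto simp: indicator_def)
  qed
  have p: "d - real (k+1) < -1" if "k \<in> K" for k using K(2)[OF that] by simp
  note I = powr_integral_greaterThan[OF p T]
  show "integrable lborel (\<lambda>z. indicator {T<..} z * (z powr d * (\<Sum>k\<in>K. c k / z ^ (k+1))))"
    unfolding eq using I by (intro Bochner_Integration.integrable_sum integrable_mult_right) auto
  have "(\<integral>z. indicator {T<..} z * (z powr d * (\<Sum>k\<in>K. c k / z ^ (k+1))) \<partial>lborel)
           = (\<Sum>k\<in>K. - (c k * T powr (d - k) / (d - k)))"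
    unfolding eq using I by (subst Bochner_Integration.integral_sum) (auto intro!: sum.cong)
  then show "(\<integral>z. indicator {T<..} z * (z powr d * (\<Sum>k\<in>K. c k / z ^ (k+1))) \<partial>lborel)
           = - (\<Sum>k\<in>K. c k * T powr (d - k) / (d - k))"
    by (simp add: sum_negf)
qed

text \<open>The terms of the expansion that are integrable at \<open>0\<close> (\<open>k < n\<close>) and those integrable
  at \<open>\<infinity>\<close> (\<open>k \<ge> n\<close>) contribute the same expression \<open>c\<^sub>k T\<^sup>d\<^sup>-\<^sup>k / (d - k)\<close>.\<close>
lemma moment_power_sum_expansion:
  fixes f :: "real \<Rightarrow> real" and c :: "nat \<Rightarrow> real" and d C M T :: real
  assumes T: "T > 0" and n: "n \<le> N" "real n - 1 < d" "d < real n"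
    and fS: "integrable lborel (\<lambda>z. indicator {0<..} z * z powr d * (f z - (\<Sum>k<n. c k / z ^ (k+1))))"
    and C: "(\<integral>z. indicator {0<..} z * z powr d * (f z - (\<Sum>k<n. c k / z ^ (k+1))) \<partial>lborel) = C"
    and fQ: "\<And>z. z > 0 \<Longrightarrow> \<bar>f z - (\<Sum>k<N. c k / z ^ (k+1))\<bar> \<le> M / z ^ (N+1)"
  shows "\<bar>(\<integral>z. indicator {0<..T} z * (z powr d * f z) \<partial>lborel)
            - (C + (\<Sum>k<N. c k * T powr (d - k) / (d - k)))\<bar> \<le> M * T powr (d - N) / (N - d)"
proof -
  have split: "(\<Sum>k<N. g k) = (\<Sum>k<n. g k) + (\<Sum>k\<in>{n..<N}. g k)" for g :: "nat \<Rightarrow> real"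
    using n(1) by (simp add: atLeast0LessThan[symmetric] sum.atLeastLessThan_concat)
  have QS: "(\<Sum>k<N. c k / z ^ (k+1)) - (\<Sum>k<n. c k / z ^ (k+1)) = (\<Sum>k\<in>{n..<N}. c k / z ^ (k+1))"
    for z :: real by (simp add: split)
  note H = power_sum_integral_greaterThanAtMost[of T "{..<n}" d c]
  note R = power_sum_integral_greaterThan[OF T, of "{n..<N}" d c]
  have "\<bar>(\<integral>z. indicator {0<..T} z * (z powr d * f z) \<partial>lborel)
            - ((\<Sum>k<n. c k * T powr (d - k) / (d - k)) + C
               - - (\<Sum>k\<in>{n..<N}. c k * T powr (d - k) / (d - k)))\<bar>
         \<le> M * T powr (d - N) / (N - d)"
    using moment_split_regularized[OF T _ fS C H(1), of N "\<lambda>z. \<Sum>k<N. c k / z ^ (k+1)" M]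
      H(2) R T n fQ unfolding QS by simp
  then show ?thesis by (simp add: split algebra_simps)
qed

lemma gbinomial_two_three:
  fixes b :: real
  shows "b gchoose 2 = b * (b - 1) / 2" "b gchoose 3 = b * (b - 1) * (b - 2) / 6"
  by (simp_all add: gbinomial_Suc numeral_eq_Suc atLeast0_atMost_Suc field_simps)

lemma binomial_moment_terms:
  fixes b T :: real
  assumes "b \<noteq> 0" "b \<noteq> 1"
  defines "\<delta> \<equiv> 2 * b + 1"
  shows "(\<Sum>k<4. (b gchoose k) * (-1) ^ k * fact k * T powr (\<delta> - k) / (\<delta> - k)) =
    T powr \<delta> / \<delta> - 1/2 * T powr (\<delta> - 1) + b * (b - 1) / (\<delta> - 2) * T powr (\<delta> - 2)
    - b * (b - 2) / 2 * T powr (\<delta> - 3)"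
proof -
  define g where "g k = (b gchoose k) * (-1) ^ k * fact k * T powr (\<delta> - k) / (\<delta> - k)" for k
  have d1: "\<delta> - 1 = 2 * b" and d3: "\<delta> - 3 = 2 * (b - 1)" by (simp_all add: \<delta>_def)
  have "g 0 = T powr \<delta> / \<delta>" by (simp add: g_def)
  moreover have "g 1 = - (1/2 * T powr (\<delta> - 1))"
    unfolding g_def using assms(1) by (simp add: d1)
  moreover have "g 2 = b * (b - 1) / (\<delta> - 2) * T powr (\<delta> - 2)"
    by (simp add: g_def gbinomial_two_three)
  moreover have "g 3 = - (b * (b - 2) / 2 * T powr (\<delta> - 3))"
  proof -
    have "2 * b - 2 \<noteq> 0" using assms(2) by simp
    then show ?thesis unfolding g_def by (simp add: d3 gbinomial_two_three fact_numeral field_simps)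
  qed
  moreover have "(\<Sum>k<4. g k) = g 0 + g 1 + g 2 + g 3" by (simp add: eval_nat_numeral)
  ultimately show ?thesis unfolding g_def[symmetric] by simp
qed

lemma tri_integral_power_expansion:
  fixes b :: real
  assumes b: "-1 < b" "b < 1/2" "b \<noteq> 0" "b \<noteq> -1/2"
  defines "\<delta> \<equiv> 2 * b + 1"
  obtains K where "\<And>T. T > 0 \<Longrightarrow> \<bar>tri_integral b T - (- (Gamma (1 + b))\<^sup>2 / (2 * cos (b * pi))
      + (\<Sum>k<4. (b gchoose k) * (-1) ^ k * fact k * T powr (\<delta> - k) / (\<delta> - k)))\<bar>
      \<le> K * T powr (\<delta> - 4)"
proof -
  define c where "c k = (b gchoose k) * (-1) ^ k * fact k" for k
  have bl: "binomial_laplace b m z = (\<Sum>k<m. c k / z ^ (k+1))" for m z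
    by (simp add: binomial_laplace_def c_def)
  obtain n where n: "n \<le> 2" "real n - 1 < \<delta>" "\<delta> < real n"
    and fS: "integrable lborel (\<lambda>z. indicator {0<..} z * z powr \<delta> *
      (beta_laplace b z - (\<Sum>k<n. c k / z ^ (k+1))))"
    and C: "(\<integral>z. indicator {0<..} z * z powr \<delta> * (beta_laplace b z - (\<Sum>k<n. c k / z ^ (k+1))) \<partial>lborel)
      = - (Gamma (1 + b))\<^sup>2 / (2 * cos (b * pi))"
    using beta_laplace_regularized_moment[OF b] unfolding bl \<delta>_def by blast
  obtain M where M: "\<And>z. z > 0 \<Longrightarrow> \<bar>beta_laplace b z - binomial_laplace b 4 z\<bar> \<le> M / z ^ (4+1)"
    using beta_laplace_expansion[OF b(1)] by blast
  have "\<bar>tri_integral b T - (- (Gamma (1 + b))\<^sup>2 / (2 * cos (b * pi))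
      + (\<Sum>k<4. c k * T powr (\<delta> - k) / (\<delta> - k)))\<bar>
      \<le> M / (4 - \<delta>) * T powr (\<delta> - 4)" if T: "T > 0" for T
    using moment_power_sum_expansion[OF T _ n(2,3) fS C, of 4 M] M n(1)
    unfolding tri_integral_eq_moment[OF b(1)] bl \<delta>_def[symmetric] by simp
  then show ?thesis unfolding c_def by (rule that)
qed

lemma tri_integral_expansion:
  fixes b :: real
  assumes b: "-1 < b" "b < 1/2" "b \<noteq> -1/2"
  defines "\<delta> \<equiv> 2 * b + 1"
  shows "(\<lambda>T. tri_integral b T -
           (- (Gamma (1 + b))\<^sup>2 / (2 * cos (b * pi)) + T powr \<delta> / \<delta> - 1/2 * T powr (\<delta> - 1)
            + b * (b - 1) / (\<delta> - 2) * T powr (\<delta> - 2) - b * (b - 2) / 2 * T powr (\<delta> - 3)))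
         \<in> O[at_top](\<lambda>T. T powr (\<delta> - 4))"
proof (cases "b = 0")
  case True
  have "eventually (\<lambda>T. exp (-T) = tri_integral b T -
      (- (Gamma (1 + b))\<^sup>2 / (2 * cos (b * pi)) + T powr \<delta> / \<delta> - 1/2 * T powr (\<delta> - 1)
       + b * (b - 1) / (\<delta> - 2) * T powr (\<delta> - 2) - b * (b - 2) / 2 * T powr (\<delta> - 3))) at_top"
    using eventually_gt_at_top[of 0] by eventually_elim (simp add: True \<delta>_def tri_integral_0)
  moreover have "(\<lambda>T::real. exp (-T)) \<in> O[at_top](\<lambda>T. T powr (\<delta> - 4))"
    unfolding \<delta>_def True by real_asymp
  ultimately show ?thesis by (rule landau_o.big.in_cong[THEN iffD1])
next
  case False
  obtain K where K: "\<And>T. T > 0 \<Longrightarrow> \<bar>tri_integral b T - (- (Gamma (1 + b))\<^sup>2 / (2 * cos (b * pi))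
      + (\<Sum>k<4. (b gchoose k) * (-1) ^ k * fact k * T powr (\<delta> - k) / (\<delta> - k)))\<bar>
      \<le> K * T powr (\<delta> - 4)"
    using tri_integral_power_expansion[OF b(1,2) False b(3)] unfolding \<delta>_def by blast
  have "b \<noteq> 1" using b(2) by simp
  note terms = binomial_moment_terms[OF False this, folded \<delta>_def]
  show ?thesis
    by (intro bigoI[of _ K] eventually_mono[OF eventually_gt_at_top[of 0]])
       (use K[unfolded terms] in \<open>simp add: algebra_simps\<close>)
qed

lemma binomial_moment_terms_half:
  fixes T :: real
  assumes "T > 0"
  shows "(\<Sum>k\<in>{1..<4}. ((-1/2) gchoose k) * (-1) ^ k * fact k * T powr (0 - real k) / (0 - real k)) =
      - (1 / (2 * T) + 3 / (8 * T\<^sup>2) + 5 / (8 * T ^ 3))"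
proof -
  define g where "g k = ((-1/2) gchoose k) * (-1) ^ k * fact k * T powr (0 - real k) / (0 - real k)"
    for k
  have "(\<Sum>k\<in>{1..<4}. g k) = g 1 + g 2 + g 3" by (simp add: numeral_eq_Suc atLeastLessThanSuc)
  moreover have "g 1 = - (1 / (2 * T))" using assms by (simp add: g_def powr_neg_one)
  moreover have "g 2 = - (3 / (8 * T\<^sup>2))"
    using assms by (simp add: g_def gbinomial_two_three powr_minus_numeral)
  moreover have "g 3 = - (5 / (8 * T ^ 3))"
    using assms by (simp add: g_def gbinomial_two_three powr_minus_numeral fact_numeral)
  ultimately show ?thesis unfolding g_def[symmetric] by simp
qed

text \<open>Here the term \<open>k = 0\<close> of the expansion, \<open>1/z\<close>, is integrable neither at \<open>0\<close> nor at \<open>\<infinity>\<close>;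
  it is kept on \<open>[1, T]\<close>, where it contributes \<open>log T\<close>.\<close>
lemma tri_integral_half_remainder:
  obtains K where "\<And>T. T \<ge> 1 \<Longrightarrow> \<bar>tri_integral (-1/2) T - (ln T + (2 * ln 2 + euler_mascheroni)
      - (1 / (2 * T) + 3 / (8 * T\<^sup>2) + 5 / (8 * T ^ 3)))\<bar> \<le> K * T powr (-4)"
proof -
  define b :: real where "b = -1/2"
  define c where "c k = (b gchoose k) * (-1) ^ k * fact k" for k
  define S where "S z = indicator {1..} z / z" for z :: real
  obtain M where M: "\<And>z. z > 0 \<Longrightarrow> \<bar>beta_laplace b z - binomial_laplace b 4 z\<bar> \<le> M / z ^ (4+1)"
    using beta_laplace_expansion[of b 4] by (auto simp: b_def)
  have "\<bar>tri_integral b T - (ln T + (2 * ln 2 + euler_mascheroni)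
      - (1 / (2 * T) + 3 / (8 * T\<^sup>2) + 5 / (8 * T ^ 3)))\<bar> \<le> M / 4 * T powr (-4)" if T: "T \<ge> 1" for T
  proof -
    have T0: "T > 0" using T by simp
    have eqS: "(\<lambda>z. indicator {0<..T} z * (z powr 0 * S z)) = (\<lambda>z. indicator {1..T} z * (1 / z))"
      by (auto simp: fun_eq_iff indicator_def S_def)
    have "binomial_laplace b 4 z - S z = (\<Sum>k\<in>{1..<4}. c k / z ^ (k+1))" if "z \<ge> 1" for z
    proof -
      have "{..<4::nat} = insert 0 {1..<4}" by auto
      then show ?thesis using that by (simp add: binomial_laplace_def c_def S_def)
    qed
    then have eqQ: "(\<lambda>z. indicator {T<..} z * (z powr 0 * (binomial_laplace b 4 z - S z))) =
        (\<lambda>z. indicator {T<..} z * (z powr 0 * (\<Sum>k\<in>{1..<4}. c k / z ^ (k+1))))"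
      using T by (auto simp: fun_eq_iff indicator_def)
    have "\<And>k. k \<in> {1..<4::nat} \<Longrightarrow> (0::real) < real k" by auto
    note R = power_sum_integral_greaterThan[OF T0 finite_atLeastLessThan this, where c=c]
    have tail: "(\<integral>z. indicator {T<..} z * (z powr 0 * (binomial_laplace b 4 z - S z)) \<partial>lborel)
        = 1 / (2 * T) + 3 / (8 * T\<^sup>2) + 5 / (8 * T ^ 3)"
    proof -
      have "(\<integral>z. indicator {T<..} z * (z powr 0 * (binomial_laplace b 4 z - S z)) \<partial>lborel)
          = - (\<Sum>k\<in>{1..<4}. c k * T powr (0 - real k) / (0 - real k))"
        unfolding eqQ by (rule R(2))
      then show ?thesis unfolding c_def b_def by (simp only: binomial_moment_terms_half[OF T0] minus_minus)
    qed
    have "(\<lambda>z. indicator {0<..} z * z powr 0 * (beta_laplace b z - S z)) =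
        (\<lambda>z. indicator {0<..} z * (beta_laplace (-1/2) z - indicator {1..} z / z))"
      by (auto simp: fun_eq_iff indicator_def S_def b_def)
    note C = beta_laplace_half_regularized_integral[folded this]
    have Sh: "integrable lborel (\<lambda>z. indicator {0<..T} z * (z powr 0 * S z))"
      unfolding eqS by (rule integral_inverse_Icc(1)[OF T])
    have QS: "integrable lborel (\<lambda>z. indicator {T<..} z * (z powr 0 * (binomial_laplace b 4 z - S z)))"
      unfolding eqQ by (rule R(1))
    have "\<bar>(\<integral>z. indicator {0<..T} z * (z powr 0 * beta_laplace b z) \<partial>lborel)
        - ((\<integral>z. indicator {0<..T} z * (z powr 0 * S z) \<partial>lborel) + (2 * ln 2 + euler_mascheroni)
           - (\<integral>z. indicator {T<..} z * (z powr 0 * (binomial_laplace b 4 z - S z)) \<partial>lborel))\<bar>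
        \<le> M * T powr (0 - real 4) / (real 4 - 0)"
      by (rule moment_split_regularized[OF T0 _ C Sh QS M]) simp
    moreover have "2 * b + 1 = 0" by (simp add: b_def)
    from tri_integral_eq_moment[of b T, unfolded this]
    have "tri_integral b T = (\<integral>z. indicator {0<..T} z * (z powr 0 * beta_laplace b z) \<partial>lborel)"
      by (simp add: b_def)
    ultimately show ?thesis
      unfolding eqS integral_inverse_Icc(2)[OF T] tail by simp
  qed
  then show ?thesis unfolding b_def by (rule that)
qed

lemma tri_integral_expansion_half:
  "(\<lambda>T. tri_integral (-1/2) T - (ln T + 2 * ln 2 + euler_mascheroni - 1 / (2 * T) - 3 / (8 * T\<^sup>2)))
     \<in> O[at_top](\<lambda>T. T powr (-3))"
proof -
  obtain K where "\<And>T. T \<ge> 1 \<Longrightarrow> \<bar>tri_integral (-1/2) T - (ln T + (2 * ln 2 + euler_mascheroni)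
      - (1 / (2 * T) + 3 / (8 * T\<^sup>2) + 5 / (8 * T ^ 3)))\<bar> \<le> K * T powr (-4)"
    using tri_integral_half_remainder by blast
  then have "(\<lambda>T. tri_integral (-1/2) T - (ln T + (2 * ln 2 + euler_mascheroni)
      - (1 / (2 * T) + 3 / (8 * T\<^sup>2) + 5 / (8 * T ^ 3)))) \<in> O[at_top](\<lambda>T. T powr (-4))"
    by (intro bigoI[of _ K] eventually_mono[OF eventually_ge_at_top[of 1]]) simp
  moreover have "(\<lambda>T::real. T powr (-4)) \<in> O[at_top](\<lambda>T. T powr (-3))" by real_asymp
  ultimately have "(\<lambda>T. tri_integral (-1/2) T - (ln T + (2 * ln 2 + euler_mascheroni)
      - (1 / (2 * T) + 3 / (8 * T\<^sup>2) + 5 / (8 * T ^ 3)))) \<in> O[at_top](\<lambda>T. T powr (-3))"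
    by (rule landau_o.big_trans)
  moreover have "(\<lambda>T::real. 5 / (8 * T ^ 3)) \<in> O[at_top](\<lambda>T. T powr (-3))" by real_asymp
  ultimately have "(\<lambda>T. (tri_integral (-1/2) T - (ln T + (2 * ln 2 + euler_mascheroni)
      - (1 / (2 * T) + 3 / (8 * T\<^sup>2) + 5 / (8 * T ^ 3)))) - 5 / (8 * T ^ 3)) \<in> O[at_top](\<lambda>T. T powr (-3))"
    by (rule sum_in_bigo(2))
  then show ?thesis by (simp add: algebra_simps)
qed

theorem lemma4p5:
  fixes \<beta> :: real
  assumes "-1 < \<beta>" and "\<beta> < 1/2"
  defines "\<delta> \<equiv> 2 * \<beta> + 1"
  shows "(\<beta> = -1/2 \<longrightarrow>
           (\<lambda>T. tri_integral \<beta> T -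
               (ln T + 2 * ln 2 + euler_mascheroni - 1 / (2 * T) - 3 / (8 * T\<^sup>2)))
             \<in> O[at_top](\<lambda>T. T powr (-3)))
       \<and> (\<beta> \<noteq> -1/2 \<longrightarrow>
           (\<lambda>T. tri_integral \<beta> T -
               (- (Gamma (1 + \<beta>))\<^sup>2 / (2 * cos (\<beta> * pi)) + T powr \<delta> / \<delta>
                - 1/2 * T powr (\<delta> - 1)
                + \<beta> * (\<beta> - 1) / (\<delta> - 2) * T powr (\<delta> - 2)
                - \<beta> * (\<beta> - 2) / 2 * T powr (\<delta> - 3)))
             \<in> O[at_top](\<lambda>T. T powr (\<delta> - 4)))"
  using tri_integral_expansion_half tri_integral_expansion[OF assms(1,2), folded \<delta>_def] by simp

end
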